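(* Let $p,q\in[1,\infty]$, let $\varphi_0,\varphi_1,\varphi$ be positive non-degenerate quasi-concave functions on $(0,\infty)$, let $\{\widetilde t_k\}_{k\in\mathbb Z}$ be a discretizing sequence for $\varphi(\varphi_0,\varphi_1)$ and $\{t_k\}_{k\in\mathbb Z}$ a discretizing sequence for $\varphi$. Then $$\left(l_q\Big(\frac1{\varphi_0(\widetilde t_k)}\Big),\,l_q\Big(\frac1{\varphi_1(\widetilde t_k)}\Big)\right)_{\varphi,p}=l_p\Big(l_q^{M_k}\Big(\frac1{\varphi(\varphi_0,\varphi_1)(\widetilde t_i)}\Big)\Big),$$ where $M_k=\{i:\ t_k\le \varphi_1(\widetilde t_i)/\varphi_0(\widetilde t_i)\le t_{k+1}\}$.
   Context: A function $\varphi:(0,\infty)\to(0,\infty)$ is non-degenerate quasi-concave if it is non-decreasing, $\varphi(t)/t$ is non-increasing, and $\lim_{t\to0+}\varphi(t)=\lim_{t\to\infty}\varphi(t)/t=\lim_{t\to0+}t/\varphi(t)=\lim_{t\to\infty}1/\varphi(t)=0$. $\varphi(\varphi_0,\varphi_1)(t)=\varphi_0(t)\varphi(\varphi_1(t)/\varphi_0(t))$. A positive sequence is strongly increasing if $\inf_k a_{k+1}/a_k\ge2$, strongly decreasing if $\sup_k a_{k+1}/a_k\le1/2$. A strongly increasing $\{s_k\}_{k\in\mathbb Z}$ is a discretizing sequence for a non-degenerate quasi-concave $\psi$ if $\{\psi(s_k)\}$ is strongly increasing, $\{\psi(s_k)/s_k\}$ is strongly decreasing, and $\mathbb Z=\mathbb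 Z_1\sqcup\mathbb Z_2$ with $\psi(s_{k+1})\le2\psi(s_k)$ for $k\in\mathbb Z_1$ and $\psi(s_k)/s_k\le2\psi(s_{k+1})/s_{k+1}$ for $k\in\mathbb Z_2$. For a Banach couple $\overline X$, $K(t,x;\overline X)=\inf_{x=x_0+x_1}(\|x_0\|_{X_0}+t\|x_1\|_{X_1})$, and $\overline X_{\varphi,p}$ is the space of $x\in X_0+X_1$ with $\big(\sum_k(K(t_k,x;\overline X)/\varphi(t_k))^p\big)^{1/p}<\infty$ (sup if $p=\infty$), where $\{t_k\}$ is the given discretizing sequence for $\varphi$. For a sequence space $E$ and positive weight $u$, $E(u)=\{a:\{a_iu_i\}\in E\}$ with norm $\|\{a_iu_i\}\|_E$; $l_p(l_q^{M_k})$ has norm $\big(\sum_k(\sum_{i\in M_k}|a_i|^q)^{p/q}\big)^{1/p}$ (usual modification for $\infty$). Sequences are indexed by $\mathbb Z$; equality means equal sets with equivalent norms. *)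

theory Defs
  imports "HOL-Analysis.Analysis"
begin

definition nd_quasi_concave :: "(real \<Rightarrow> real) \<Rightarrow> bool" where
  "nd_quasi_concave \<phi> \<longleftrightarrow>
     (\<forall>t>0. \<phi> t > 0) \<and>
     (\<forall>s t. 0 < s \<longrightarrow> s \<le> t \<longrightarrow> \<phi> s \<le> \<phi> t) \<and>
     (\<forall>s t. 0 < s \<longrightarrow> s \<le> t \<longrightarrow> \<phi> t / t \<le> \<phi> s / s) \<and>
     (\<phi> \<longlongrightarrow> 0) (at_right 0) \<and>
     ((\<lambda>t. \<phi> t / t) \<longlongrightarrow> 0) at_top \<and>
     ((\<lambda>t. t / \<phi> t) \<longlongrightarrow> 0) (at_right 0) \<and>
     ((\<lambda>t. 1 / \<phi> t) \<longlongrightarrow> 0) at_top"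

(* \<phi>(\<phi>0,\<phi>1)(t) = \<phi>0(t) \<phi>(\<phi>1(t)/\<phi>0(t)) *)
definition comp_qc :: "(real \<Rightarrow> real) \<Rightarrow> (real \<Rightarrow> real) \<Rightarrow> (real \<Rightarrow> real) \<Rightarrow> real \<Rightarrow> real" where
  "comp_qc \<phi> \<phi>0 \<phi>1 t = \<phi>0 t * \<phi> (\<phi>1 t / \<phi>0 t)"

definition strongly_increasing :: "(int \<Rightarrow> real) \<Rightarrow> bool" where
  "strongly_increasing a \<longleftrightarrow> (\<forall>k. a k > 0) \<and> (\<forall>k. a (k + 1) / a k \<ge> 2)"

definition strongly_decreasing :: "(int \<Rightarrow> real) \<Rightarrow> bool" where
  "strongly_decreasing a \<longleftrightarrow> (\<forall>k. a k > 0) \<and> (\<forall>k. a (k + 1) / a k \<le> 1 / 2)"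

definition discretizing_seq :: "(int \<Rightarrow> real) \<Rightarrow> (real \<Rightarrow> real) \<Rightarrow> bool" where
  "discretizing_seq s \<psi> \<longleftrightarrow>
     strongly_increasing s \<and>
     strongly_increasing (\<lambda>k. \<psi> (s k)) \<and>
     strongly_decreasing (\<lambda>k. \<psi> (s k) / s k) \<and>
     (\<exists>Z1 :: int set. \<forall>k.
        (k \<in> Z1 \<longrightarrow> \<psi> (s (k + 1)) \<le> 2 * \<psi> (s k)) \<and>
        (k \<notin> Z1 \<longrightarrow> \<psi> (s k) / s k \<le> 2 * (\<psi> (s (k + 1)) / s (k + 1))))"

definition seq_norm :: "ereal \<Rightarrow> (int \<Rightarrow> real) \<Rightarrow> ereal" where
  "seq_norm p a =
     (if p = \<infinity> then (SUP i. ereal \<bar>a i\<bar>)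
      else if (\<lambda>i. \<bar>a i\<bar> powr real_of_ereal p) summable_on UNIV
        then ereal ((\<Sum>\<^sub>\<infinity>i. \<bar>a i\<bar> powr real_of_ereal p) powr (1 / real_of_ereal p))
        else \<infinity>)"

definition weighted_lq_norm :: "ereal \<Rightarrow> (int \<Rightarrow> real) \<Rightarrow> (int \<Rightarrow> real) \<Rightarrow> ereal" where
  "weighted_lq_norm q u a = seq_norm q (\<lambda>i. a i * u i)"

definition mixed_norm :: "ereal \<Rightarrow> ereal \<Rightarrow> (int \<Rightarrow> int set) \<Rightarrow> (int \<Rightarrow> real) \<Rightarrow> (int \<Rightarrow> real) \<Rightarrow> ereal" where
  "mixed_norm p q M u a =
     (let inner = (\<lambda>k. seq_norm q (\<lambda>i. if i \<in> M k then a i * u i else 0))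
      in if (\<forall>k. inner k < \<infinity>) then seq_norm p (\<lambda>k. real_of_ereal (inner k)) else \<infinity>)"

(* A Banach couple of sequence spaces is given by two (extended) norms;
   the space is {x. N x < \<infinity>}. *)
definition in_sum_space :: "((int \<Rightarrow> real) \<Rightarrow> ereal) \<Rightarrow> ((int \<Rightarrow> real) \<Rightarrow> ereal) \<Rightarrow> (int \<Rightarrow> real) \<Rightarrow> bool" where
  "in_sum_space N0 N1 x \<longleftrightarrow> (\<exists>x0 x1. x = (\<lambda>i. x0 i + x1 i) \<and> N0 x0 < \<infinity> \<and> N1 x1 < \<infinity>)"

definition K_functional :: "((int \<Rightarrow> real) \<Rightarrow> ereal) \<Rightarrow> ((int \<Rightarrow> real) \<Rightarrow> ereal) \<Rightarrow> real \<Rightarrow> (int \<Rightarrow> real) \<Rightarrow> ereal" where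
  "K_functional N0 N1 t x =
     Inf {N0 x0 + ereal t * N1 x1 | x0 x1. x = (\<lambda>i. x0 i + x1 i) \<and> N0 x0 < \<infinity> \<and> N1 x1 < \<infinity>}"

definition interp_norm :: "((int \<Rightarrow> real) \<Rightarrow> ereal) \<Rightarrow> ((int \<Rightarrow> real) \<Rightarrow> ereal) \<Rightarrow> (real \<Rightarrow> real) \<Rightarrow> ereal \<Rightarrow> (int \<Rightarrow> real) \<Rightarrow> (int \<Rightarrow> real) \<Rightarrow> ereal" where
  "interp_norm N0 N1 \<phi> p t x =
     (if in_sum_space N0 N1 x
      then seq_norm p (\<lambda>k. real_of_ereal (K_functional N0 N1 (t k) x) / \<phi> (t k))
      else \<infinity>)"

definition equiv_spaces :: "((int \<Rightarrow> real) \<Rightarrow> ereal) \<Rightarrow> ((int \<Rightarrow> real) \<Rightarrow> ereal) \<Rightarrow> bool" where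
  "equiv_spaces N1 N2 \<longleftrightarrow>
     (\<forall>a. N1 a < \<infinity> \<longleftrightarrow> N2 a < \<infinity>) \<and>
     (\<exists>C::real. C > 0 \<and> (\<forall>a. N1 a < \<infinity> \<longrightarrow>
         N1 a \<le> ereal C * N2 a \<and> N2 a \<le> ereal C * N1 a))"

end

theory Submission
  imports Defs
begin

text \<open>
  The K-functional of the couple (l_q(w0), l_q(w1)) is computed coordinatewise: K(t, a) is
  equivalent, uniformly in t, to the l_q norm of a_i min(w0_i, t w1_i). Hence the interpolation
  norm is equivalent to the l_p norm over j of the rows ||a_i w0_i min(1, t_j/u_i) / \<phi>(t_j)||_q,
  where u_i = w0_i/w1_i. For t_k <= u_i <= t_(k+1), the lacunarity of \<phi>(t_j) and \<phi>(t_j)/t_j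
  bounds the weight of row j by 2^(1-|j-k|) / \<phi>(u_i), and the splitting of \<int> into Z_1 and Z_2
  bounds 1/\<phi>(u_i) by twice the sum of the weights of rows k and k+1. The second estimate controls
  each block of the mixed norm by two neighbouring rows; the first makes every row a geometric
  sup-convolution of the block norms, and such convolutions are bounded on l_p.

  The corollary is the case w0_i = 1/\<phi>0(tt_i), w1_i = 1/\<phi>1(tt_i), where
  w0_i/\<phi>(w0_i/w1_i) = 1/\<phi>(\<phi>0,\<phi>1)(tt_i); of the hypotheses on \<phi>0, \<phi>1 and tt only
  positivity is used.
\<close>

section \<open>Sequence norms\<close>

lemma powr_le_powr_iff:
  fixes x y r :: real
  assumes "0 < r" and "0 \<le> x" and "0 \<le> y"
  shows "x powr r \<le> y powr r \<longleftrightarrow> x \<le> y"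
  using assms by (meson not_le powr_less_mono2 powr_mono2 less_imp_le)

lemma le_powr_self:
  fixes x r :: real
  assumes "1 \<le> x" and "1 \<le> r"
  shows "x \<le> x powr r"
  using assms powr_mono[of 1 r x] by (simp add: powr_one)

lemma ereal_ge_1_cases:
  assumes "(1::ereal) \<le> p"
  obtains "p = \<infinity>" | r where "1 \<le> r" and "p = ereal r"
  using assms by (cases p) auto

lemma ereal_le_cmult_self:
  assumes "0 \<le> (x::ereal)" and "1 \<le> C"
  shows "x \<le> ereal C * x"
  using ereal_mult_right_mono[of 1 "ereal C" x] assms by simp

lemma ereal_cmult_less_infinity: "0 \<le> C \<Longrightarrow> x < \<infinity> \<Longrightarrow> ereal C * x < \<infinity>"
  by (cases x) auto

lemma single_le_nn_integral_count_space:
  fixes h :: "int \<Rightarrow> ennreal"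
  shows "h k \<le> (\<integral>\<^sup>+ i. h i \<partial>count_space UNIV)"
proof -
  have "h k = (\<integral>\<^sup>+ i. h i * indicator {k} i \<partial>count_space UNIV)" by simp
  also have "\<dots> \<le> (\<integral>\<^sup>+ i. h i \<partial>count_space UNIV)"
    by (intro nn_integral_mono) (auto simp: indicator_def)
  finally show ?thesis .
qed

lemma summable_on_iff_nn_integral_finite:
  fixes g :: "int \<Rightarrow> real"
  assumes "\<And>i. 0 \<le> g i"
  shows "g summable_on UNIV \<longleftrightarrow> (\<integral>\<^sup>+ i. ennreal (g i) \<partial>count_space UNIV) < \<infinity>"
proof -
  have "g summable_on UNIV \<longleftrightarrow> Infinite_Set_Sum.abs_summable_on g UNIV"
    using summable_on_iff_abs_summable_on_real abs_summable_equivalent by blast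
  also have "\<dots> \<longleftrightarrow> (\<integral>\<^sup>+ i. ennreal (g i) \<partial>count_space UNIV) < \<infinity>"
    using assms by (simp add: Infinite_Set_Sum.abs_summable_on_def integrable_iff_bounded)
  finally show ?thesis .
qed

lemma infsum_eq_nn_integral:
  fixes g :: "int \<Rightarrow> real"
  assumes "\<And>i. 0 \<le> g i" and "g summable_on UNIV"
  shows "ennreal (infsum g UNIV) = (\<integral>\<^sup>+ i. ennreal (g i) \<partial>count_space UNIV)"
proof -
  have abs: "Infinite_Set_Sum.abs_summable_on g UNIV"
    using assms summable_on_iff_abs_summable_on_real abs_summable_equivalent by blast
  show ?thesis
    using nn_integral_conv_infsetsum[OF abs] infsetsum_infsum[OF abs] assms by simp
qed

text \<open>For finite exponents the estimates are carried out on the \<open>r\<close>-th power of the norm, a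
  nonnegative integral over \<open>\<int>\<close> that, unlike the sum in \<open>seq_norm\<close>, is always defined.\<close>

definition power_sum :: "real \<Rightarrow> (int \<Rightarrow> real) \<Rightarrow> ennreal" where
  "power_sum r f = (\<integral>\<^sup>+ i. ennreal (\<bar>f i\<bar> powr r) \<partial>count_space UNIV)"

lemma power_sum_mono:
  assumes "0 < r" and "\<And>i. \<bar>f i\<bar> \<le> \<bar>g i\<bar>"
  shows "power_sum r f \<le> power_sum r g"
  unfolding power_sum_def using assms by (intro nn_integral_mono ennreal_leI powr_mono2) auto

lemma power_sum_cmult:
  assumes "0 \<le> c"
  shows "power_sum r (\<lambda>i. c * f i) = ennreal (c powr r) * power_sum r f"
  unfolding power_sum_def using assms
  by (simp add: abs_mult powr_mult ennreal_mult nn_integral_cmult[symmetric])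

lemma power_sum_le_weighted:
  assumes "1 \<le> r" and "\<And>k. 0 \<le> a k" and "\<And>k. a k \<le> 1"
  shows "power_sum r (\<lambda>k. a k * B k)
    \<le> (\<integral>\<^sup>+ k. ennreal (a k) * ennreal (\<bar>B k\<bar> powr r) \<partial>count_space UNIV)"
  unfolding power_sum_def
proof (intro nn_integral_mono)
  fix k
  have "a k powr r \<le> a k"
    using assms(1) assms(2,3)[of k] by (cases "a k = 0") (auto intro: powr_le_one_le)
  then show "ennreal (\<bar>a k * B k\<bar> powr r) \<le> ennreal (a k) * ennreal (\<bar>B k\<bar> powr r)"
    using assms by (simp add: abs_mult powr_mult ennreal_mult[symmetric] mult_right_mono ennreal_leI)
qed

lemma seq_norm_infinity: "seq_norm \<infinity> f = (SUP i. ereal \<bar>f i\<bar>)"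
  by (simp add: seq_norm_def)

lemma seq_norm_eq_power_sum:
  assumes "0 < r"
  shows "seq_norm (ereal r) f =
    (if power_sum r f = \<infinity> then \<infinity> else ereal (enn2real (power_sum r f) powr (1 / r)))"
proof -
  have nonneg: "\<And>i. 0 \<le> \<bar>f i\<bar> powr r" by simp
  show ?thesis
  proof (cases "power_sum r f = \<infinity>")
    case True
    then show ?thesis
      using summable_on_iff_nn_integral_finite[OF nonneg]
      by (simp add: seq_norm_def power_sum_def)
  next
    case False
    then have sum: "(\<lambda>i. \<bar>f i\<bar> powr r) summable_on UNIV"
      using summable_on_iff_nn_integral_finite[OF nonneg]
      by (simp add: power_sum_def top.not_eq_extremum)
    have "ennreal (infsum (\<lambda>i. \<bar>f i\<bar> powr r) UNIV) = power_sum r f"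
      unfolding power_sum_def by (rule infsum_eq_nn_integral[OF nonneg sum])
    moreover have "0 \<le> infsum (\<lambda>i. \<bar>f i\<bar> powr r) UNIV"
      by (rule infsum_nonneg) simp
    ultimately have "infsum (\<lambda>i. \<bar>f i\<bar> powr r) UNIV = enn2real (power_sum r f)"
      by (metis enn2real_ennreal)
    then show ?thesis using sum False by (simp add: seq_norm_def)
  qed
qed

lemma seq_norm_le_iff_power_sum_le:
  assumes "0 < r" and "0 \<le> b"
  shows "seq_norm (ereal r) f \<le> ereal b \<longleftrightarrow> power_sum r f \<le> ennreal (b powr r)"
proof (cases "power_sum r f")
  case (real P)
  have "P powr (1 / r) \<le> b \<longleftrightarrow> (P powr (1 / r)) powr r \<le> b powr r"
    using assms real(1) by (simp add: powr_le_powr_iff)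
  also have "\<dots> \<longleftrightarrow> P \<le> b powr r"
    using assms real(1) by (simp add: powr_powr)
  finally show ?thesis
    using assms real by (simp add: seq_norm_eq_power_sum)
next
  case top
  then show ?thesis using assms by (simp add: seq_norm_eq_power_sum top_unique)
qed

lemma abs_le_seq_norm_iff_powr_le_power_sum:
  assumes "0 < r"
  shows "ereal \<bar>x\<bar> \<le> seq_norm (ereal r) f \<longleftrightarrow> ennreal (\<bar>x\<bar> powr r) \<le> power_sum r f"
proof (cases "power_sum r f")
  case (real P)
  have "\<bar>x\<bar> \<le> P powr (1 / r) \<longleftrightarrow> \<bar>x\<bar> powr r \<le> (P powr (1 / r)) powr r"
    using assms real(1) by (simp add: powr_le_powr_iff)
  also have "\<dots> \<longleftrightarrow> \<bar>x\<bar> powr r \<le> P"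
    using assms real(1) by (simp add: powr_powr)
  finally show ?thesis
    using assms real by (simp add: seq_norm_eq_power_sum ennreal_le_iff)
next
  case top
  then show ?thesis using assms by (simp add: seq_norm_eq_power_sum)
qed

lemma seq_norm_le_cmult_if_power_sum_le:
  assumes "0 < r" and "0 < C"
    and "power_sum r g \<le> ennreal (C powr r) * power_sum r f"
  shows "seq_norm (ereal r) g \<le> ereal C * seq_norm (ereal r) f"
proof (cases "power_sum r f")
  case (real F)
  let ?b = "F powr (1 / r)"
  have "power_sum r g \<le> ennreal ((C * ?b) powr r)"
    using assms real by (simp add: powr_mult powr_powr ennreal_mult)
  then have "seq_norm (ereal r) g \<le> ereal (C * ?b)"
    using assms by (simp add: seq_norm_le_iff_power_sum_le)
  then show ?thesis
    using assms real by (simp add: seq_norm_eq_power_sum)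
next
  case top
  then show ?thesis using assms by (simp add: seq_norm_eq_power_sum)
qed

lemma seq_norm_nonneg:
  assumes "1 \<le> p"
  shows "0 \<le> seq_norm p f"
proof (cases rule: ereal_ge_1_cases[OF assms])
  case 1
  show ?thesis
    unfolding 1 seq_norm_infinity by (simp add: order_trans[OF _ SUP_upper[of 0]])
next
  case (2 r)
  then show ?thesis by (simp add: seq_norm_eq_power_sum)
qed

lemma seq_norm_mono:
  assumes "1 \<le> p" and "\<And>i. \<bar>f i\<bar> \<le> \<bar>g i\<bar>"
  shows "seq_norm p f \<le> seq_norm p g"
proof (cases rule: ereal_ge_1_cases[OF assms(1)])
  case 1
  show ?thesis unfolding 1 seq_norm_infinity using assms(2) by (simp add: SUP_mono')
next
  case (2 r)
  have "seq_norm (ereal r) f \<le> ereal 1 * seq_norm (ereal r) g"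
    using 2 assms(2) by (intro seq_norm_le_cmult_if_power_sum_le) (auto intro: power_sum_mono)
  then show ?thesis using 2 by simp
qed

lemma seq_norm_cmult_le:
  assumes "1 \<le> p" and "0 < c"
  shows "seq_norm p (\<lambda>i. c * f i) \<le> ereal c * seq_norm p f"
proof (cases rule: ereal_ge_1_cases[OF assms(1)])
  case 1
  have "(SUP i. ereal \<bar>c * f i\<bar>) = (SUP i. ereal c * ereal \<bar>f i\<bar>)"
    using assms by (simp add: abs_mult)
  also have "\<dots> = ereal c * (SUP i. ereal \<bar>f i\<bar>)"
    using assms by (intro SUP_ereal_mult_left) auto
  finally show ?thesis unfolding 1 seq_norm_infinity by simp
next
  case (2 r)
  show ?thesis
    unfolding 2 using 2 assms(2)
    by (intro seq_norm_le_cmult_if_power_sum_le) (auto simp: power_sum_cmult)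
qed

lemma seq_norm_cmult:
  assumes "1 \<le> p" and "0 < c"
  shows "seq_norm p (\<lambda>i. c * f i) = ereal c * seq_norm p f"
proof (rule antisym)
  show "seq_norm p (\<lambda>i. c * f i) \<le> ereal c * seq_norm p f"
    by (rule seq_norm_cmult_le[OF assms])
  have "seq_norm p f = seq_norm p (\<lambda>i. (1 / c) * (c * f i))"
    using assms by simp
  also have "\<dots> \<le> ereal (1 / c) * seq_norm p (\<lambda>i. c * f i)"
    using assms by (intro seq_norm_cmult_le) auto
  finally have "ereal c * seq_norm p f \<le> ereal c * (ereal (1 / c) * seq_norm p (\<lambda>i. c * f i))"
    using assms by (intro ereal_mult_left_mono) auto
  also have "\<dots> = (ereal c * ereal (1 / c)) * seq_norm p (\<lambda>i. c * f i)"
    by (simp only: mult.assoc)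
  also have "ereal c * ereal (1 / c) = 1"
    using assms by simp
  finally show "ereal c * seq_norm p f \<le> seq_norm p (\<lambda>i. c * f i)" by simp
qed

lemma seq_norm_divide:
  assumes "1 \<le> p" and "0 < c"
  shows "seq_norm p (\<lambda>i. f i / c) = ereal (1 / c) * seq_norm p f"
  using seq_norm_cmult[OF assms(1), of "1 / c" f] assms(2) by simp

lemma abs_le_seq_norm:
  assumes "1 \<le> p"
  shows "ereal \<bar>f i\<bar> \<le> seq_norm p f"
proof (cases rule: ereal_ge_1_cases[OF assms])
  case 1
  show ?thesis unfolding 1 seq_norm_infinity by (auto intro: SUP_upper)
next
  case (2 r)
  have "ennreal (\<bar>f i\<bar> powr r) \<le> power_sum r f"
    unfolding power_sum_def by (rule single_le_nn_integral_count_space)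
  then show ?thesis using 2 by (simp add: abs_le_seq_norm_iff_powr_le_power_sum)
qed

lemma seq_norm_infinity_le:
  assumes "1 \<le> p"
  shows "seq_norm \<infinity> f \<le> seq_norm p f"
  using abs_le_seq_norm[OF assms] by (simp add: seq_norm_infinity SUP_least)

lemma seq_norm_shift:
  assumes "1 \<le> p"
  shows "seq_norm p (\<lambda>k. f (k + m)) = seq_norm p f"
proof -
  have bij: "bij_betw (\<lambda>k::int. k + m) UNIV UNIV"
    by (rule bij_betwI[where g="\<lambda>k. k - m"]) auto
  show ?thesis
  proof (cases rule: ereal_ge_1_cases[OF assms])
    case 1
    have "(SUP k. ereal \<bar>f (k + m)\<bar>) = (SUP k. ereal \<bar>f k\<bar>)"
      using bij by (metis bij_betw_def image_image)
    then show ?thesis unfolding 1 seq_norm_infinity .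
  next
    case (2 r)
    have "power_sum r (\<lambda>k. f (k + m)) = power_sum r f"
      unfolding power_sum_def
      using nn_integral_bij_count_space[OF bij, of "\<lambda>k. ennreal (\<bar>f k\<bar> powr r)"] by simp
    then show ?thesis using 2 by (simp add: seq_norm_eq_power_sum)
  qed
qed

lemma power_sum_quasi_triangle:
  assumes "0 < r" and h: "\<And>i. \<bar>h i\<bar> \<le> \<bar>f i\<bar> + \<bar>g i\<bar>"
  shows "power_sum r h \<le> ennreal (2 powr r) * (power_sum r f + power_sum r g)"
proof -
  have "\<bar>h i\<bar> powr r \<le> 2 powr r * (\<bar>f i\<bar> powr r + \<bar>g i\<bar> powr r)" for i
  proof -
    have "\<bar>h i\<bar> powr r \<le> (2 * max \<bar>f i\<bar> \<bar>g i\<bar>) powr r"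
      using h[of i] assms(1) by (intro powr_mono2) auto
    also have "\<dots> = 2 powr r * max \<bar>f i\<bar> \<bar>g i\<bar> powr r"
      by (simp add: powr_mult)
    also have "max \<bar>f i\<bar> \<bar>g i\<bar> powr r \<le> \<bar>f i\<bar> powr r + \<bar>g i\<bar> powr r"
      by (simp add: max_def)
    finally show ?thesis by simp
  qed
  then show ?thesis
    unfolding power_sum_def
    by (auto simp: nn_integral_cmult[symmetric] nn_integral_add[symmetric] ennreal_mult[symmetric]
        ennreal_plus[symmetric] simp del: ennreal_plus intro!: nn_integral_mono)
qed

lemma powr_add_le:
  fixes a b r :: real
  assumes "1 \<le> r" and "0 \<le> a" and "0 \<le> b"
  shows "2 powr r * (a powr r + b powr r) \<le> (4 * (a + b)) powr r"
proof -
  have "a powr r + b powr r \<le> 2 * (a + b) powr r"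
    using assms powr_mono2[of r a "a + b"] powr_mono2[of r b "a + b"] by auto
  also have "\<dots> \<le> 2 powr r * (a + b) powr r"
    using assms le_powr_self[of 2 r] by (intro mult_right_mono) auto
  finally have "2 powr r * (a powr r + b powr r) \<le> 2 powr r * (2 powr r * (a + b) powr r)"
    by (intro mult_left_mono) auto
  also have "\<dots> = (4 * (a + b)) powr r"
    using assms by (simp add: powr_mult[symmetric])
  finally show ?thesis .
qed

lemma seq_norm_quasi_triangle:
  assumes p: "1 \<le> p" and h: "\<And>i. \<bar>h i\<bar> \<le> \<bar>f i\<bar> + \<bar>g i\<bar>"
  shows "seq_norm p h \<le> 4 * (seq_norm p f + seq_norm p g)"
proof (cases "seq_norm p f = \<infinity> \<or> seq_norm p g = \<infinity>")
  case True
  then show ?thesis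
    using seq_norm_nonneg[OF p, of f] seq_norm_nonneg[OF p, of g] by auto
next
  case False
  then obtain a b where a: "seq_norm p f = ereal a" and b: "seq_norm p g = ereal b"
    using seq_norm_nonneg[OF p, of f] seq_norm_nonneg[OF p, of g]
    by (cases "seq_norm p f"; cases "seq_norm p g") auto
  have ab: "0 \<le> a" "0 \<le> b"
    using seq_norm_nonneg[OF p, of f] seq_norm_nonneg[OF p, of g] a b by auto
  have "seq_norm p h \<le> ereal (4 * (a + b))"
  proof (cases rule: ereal_ge_1_cases[OF p])
    case 1
    have "ereal \<bar>h i\<bar> \<le> ereal (4 * (a + b))" for i
      using h[of i] abs_le_seq_norm[OF p, of f i] abs_le_seq_norm[OF p, of g i] a b ab by simp
    then show ?thesis
      unfolding 1 seq_norm_infinity by (simp add: SUP_least)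
  next
    case (2 r)
    have bound: "ennreal (2 powr r) * (ennreal (a powr r) + ennreal (b powr r))
        \<le> ennreal ((4 * (a + b)) powr r)"
      using powr_add_le[OF 2(1) ab]
      by (simp add: ennreal_mult[symmetric] ennreal_plus[symmetric] ennreal_leI del: ennreal_plus)
    have "power_sum r h \<le> ennreal (2 powr r) * (power_sum r f + power_sum r g)"
      using 2 h by (intro power_sum_quasi_triangle) auto
    also have "\<dots> \<le> ennreal (2 powr r) * (ennreal (a powr r) + ennreal (b powr r))"
      using 2 a b ab
      by (intro mult_left_mono add_mono) (auto simp: seq_norm_le_iff_power_sum_le[symmetric])
    finally show ?thesis
      using bound 2 ab by (simp add: seq_norm_le_iff_power_sum_le)
  qed
  then show ?thesis using a b by simp
qed

lemma nn_integral_geometric_nat: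
  assumes "0 \<le> \<tau>" and "\<tau> < (1::real)"
  shows "(\<integral>\<^sup>+ n. ennreal (\<tau> ^ n) \<partial>count_space UNIV) = ennreal (1 / (1 - \<tau>))"
  using assms
  by (simp add: nn_integral_count_space_nat suminf_ennreal2 summable_geometric suminf_geometric)

lemma nn_integral_geometric_int_le:
  assumes "0 \<le> \<tau>" and "\<tau> < (1::real)"
  shows "(\<integral>\<^sup>+ k. ennreal (\<tau> ^ nat \<bar>j - k\<bar>) \<partial>count_space UNIV) \<le> ennreal (2 / (1 - \<tau>))"
proof -
  let ?f = "\<lambda>m::int. ennreal (\<tau> ^ nat \<bar>m\<bar>)"
  have shift: "bij_betw (\<lambda>k. j - k) UNIV UNIV"
    by (rule bij_betwI[where g="\<lambda>k. j - k"]) auto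
  have pos: "bij_betw int UNIV {0..}"
    by (rule bij_betwI[where g=nat]) auto
  have neg: "bij_betw (\<lambda>n. - int n) UNIV {..0}"
    by (rule bij_betwI[where g="\<lambda>m. nat (- m)"]) auto
  have "(\<integral>\<^sup>+ k. ?f (j - k) \<partial>count_space UNIV) = (\<integral>\<^sup>+ m. ?f m \<partial>count_space UNIV)"
    by (rule nn_integral_bij_count_space[OF shift])
  also have "\<dots> \<le> (\<integral>\<^sup>+ m. ?f m * indicator {0..} m + ?f m * indicator {..0} m \<partial>count_space UNIV)"
    by (intro nn_integral_mono) (auto simp: indicator_def)
  also have "\<dots> = (\<integral>\<^sup>+ m. ?f m \<partial>count_space {0..}) + (\<integral>\<^sup>+ m. ?f m \<partial>count_space {..0})"
    by (simp add: nn_integral_add nn_integral_count_space_indicator)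
  also have "(\<integral>\<^sup>+ m. ?f m \<partial>count_space {0..}) = ennreal (1 / (1 - \<tau>))"
    using nn_integral_bij_count_space[OF pos, of ?f] nn_integral_geometric_nat[OF assms] by simp
  also have "(\<integral>\<^sup>+ m. ?f m \<partial>count_space {..0}) = ennreal (1 / (1 - \<tau>))"
    using nn_integral_bij_count_space[OF neg, of ?f] nn_integral_geometric_nat[OF assms] by simp
  finally show ?thesis
    using assms by (simp add: ennreal_plus[symmetric] del: ennreal_plus)
qed

lemma nn_integral_count_space_fibres:
  fixes w h :: "int \<Rightarrow> ennreal" and \<kappa> :: "int \<Rightarrow> int"
  shows "(\<integral>\<^sup>+ i. w (\<kappa> i) * h i \<partial>count_space UNIV) =
         (\<integral>\<^sup>+ k. w k * (\<integral>\<^sup>+ i. (if \<kappa> i = k then h i else 0) \<partial>count_space UNIV) \<partial>count_space UNIV)"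
proof -
  have "(\<integral>\<^sup>+ k. w k * (\<integral>\<^sup>+ i. (if \<kappa> i = k then h i else 0) \<partial>count_space UNIV) \<partial>count_space UNIV)
      = (\<integral>\<^sup>+ k. \<integral>\<^sup>+ i. w k * h i * indicator {\<kappa> i} k \<partial>count_space UNIV \<partial>count_space UNIV)"
    by (intro nn_integral_cong)
      (auto simp: nn_integral_cmult[symmetric] indicator_def intro!: nn_integral_cong)
  also have "\<dots> = (\<integral>\<^sup>+ i. \<integral>\<^sup>+ k. w k * h i * indicator {\<kappa> i} k \<partial>count_space UNIV \<partial>count_space UNIV)"
    by (rule nn_integral_count_space_nn_integral) auto
  also have "\<dots> = (\<integral>\<^sup>+ i. w (\<kappa> i) * h i \<partial>count_space UNIV)"
    by (intro nn_integral_cong) simp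
  finally show ?thesis by simp
qed

lemma power_sum_fibres:
  fixes \<kappa> :: "int \<Rightarrow> int"
  assumes "0 < r" and "\<And>k. 0 \<le> w k"
  shows "power_sum r (\<lambda>i. w (\<kappa> i) * c i) =
    (\<integral>\<^sup>+ k. ennreal (w k powr r) * power_sum r (\<lambda>i. if \<kappa> i = k then c i else 0) \<partial>count_space UNIV)"
proof -
  have "power_sum r (\<lambda>i. w (\<kappa> i) * c i) =
        (\<integral>\<^sup>+ i. ennreal (w (\<kappa> i) powr r) * ennreal (\<bar>c i\<bar> powr r) \<partial>count_space UNIV)"
    unfolding power_sum_def using assms by (simp add: abs_mult powr_mult ennreal_mult)
  also have "\<dots> = (\<integral>\<^sup>+ k. ennreal (w k powr r) *
      (\<integral>\<^sup>+ i. (if \<kappa> i = k then ennreal (\<bar>c i\<bar> powr r) else 0) \<partial>count_space UNIV) \<partial>count_space UNIV)"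
    by (rule nn_integral_count_space_fibres)
  also have "\<dots> = (\<integral>\<^sup>+ k. ennreal (w k powr r) * power_sum r (\<lambda>i. if \<kappa> i = k then c i else 0) \<partial>count_space UNIV)"
    unfolding power_sum_def using assms
    by (intro nn_integral_cong arg_cong2[where f="(*)"] refl) auto
  finally show ?thesis .
qed

lemma seq_norm_fibres_le:
  fixes \<kappa> :: "int \<Rightarrow> int" and w \<beta> c :: "int \<Rightarrow> real"
  assumes q: "1 \<le> q" and w: "\<And>k. 0 \<le> w k"
    and \<beta>: "\<And>k. seq_norm q (\<lambda>i. if \<kappa> i = k then c i else 0) \<le> ereal (\<beta> k)"
  shows "seq_norm q (\<lambda>i. w (\<kappa> i) * c i) \<le> seq_norm q (\<lambda>k. w k * \<beta> k)"
proof (cases rule: ereal_ge_1_cases[OF q])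
  case 1
  have "ereal \<bar>w (\<kappa> i) * c i\<bar> \<le> seq_norm q (\<lambda>k. w k * \<beta> k)" for i
  proof -
    have "ereal \<bar>c i\<bar> \<le> ereal (\<beta> (\<kappa> i))"
      using order_trans[OF abs_le_seq_norm[OF q, of "\<lambda>i'. if \<kappa> i' = \<kappa> i then c i' else 0" i]
          \<beta>[of "\<kappa> i"]]
      by simp
    then have "\<bar>w (\<kappa> i) * c i\<bar> \<le> \<bar>w (\<kappa> i) * \<beta> (\<kappa> i)\<bar>"
      using w[of "\<kappa> i"] by (simp add: abs_mult mult_left_mono)
    then show ?thesis
      using abs_le_seq_norm[OF q, of "\<lambda>k. w k * \<beta> k" "\<kappa> i"]
      by (meson ereal_less_eq(3) order_trans)
  qed
  then show ?thesis unfolding 1 seq_norm_infinity by (rule SUP_least)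
next
  case (2 r)
  have \<beta>_nonneg: "0 \<le> \<beta> k" for k
    using seq_norm_nonneg[OF q] \<beta>[of k] by (metis ereal_less_eq(5) order_trans)
  have "power_sum r (\<lambda>i. w (\<kappa> i) * c i) = (\<integral>\<^sup>+ k. ennreal (w k powr r) *
      power_sum r (\<lambda>i. if \<kappa> i = k then c i else 0) \<partial>count_space UNIV)"
    using 2 w by (intro power_sum_fibres) auto
  also have "\<dots> \<le> (\<integral>\<^sup>+ k. ennreal (w k powr r) * ennreal (\<beta> k powr r) \<partial>count_space UNIV)"
    using 2 \<beta> \<beta>_nonneg
    by (intro nn_integral_mono mult_left_mono) (auto simp: seq_norm_le_iff_power_sum_le[symmetric])
  also have "\<dots> = power_sum r (\<lambda>k. w k * \<beta> k)"
    unfolding power_sum_def using w \<beta>_nonneg by (simp add: abs_mult powr_mult ennreal_mult)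
  finally have "seq_norm (ereal r) (\<lambda>i. w (\<kappa> i) * c i) \<le> ereal 1 * seq_norm (ereal r) (\<lambda>k. w k * \<beta> k)"
    using 2 by (intro seq_norm_le_cmult_if_power_sum_le) auto
  then show ?thesis using 2 by simp
qed

lemma seq_norm_geometric_le_bound:
  fixes x :: "int \<Rightarrow> real"
  assumes q: "1 \<le> q" and \<tau>: "0 \<le> \<tau>" "\<tau> < 1" and x: "\<And>k. \<bar>x k\<bar> \<le> s"
  shows "seq_norm q (\<lambda>k. \<tau> ^ nat \<bar>j - k\<bar> * x k) \<le> ereal (2 / (1 - \<tau>) * s)"
proof -
  define C where "C = 2 / (1 - \<tau>)"
  have s: "0 \<le> s" using x[of 0] by linarith
  have C: "1 \<le> C" using \<tau> by (simp add: C_def field_simps)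
  have pow: "0 \<le> \<tau> ^ n" "\<tau> ^ n \<le> 1" for n
    using \<tau> by (auto intro: power_le_one)
  have "seq_norm q (\<lambda>k. \<tau> ^ nat \<bar>j - k\<bar> * x k) \<le> ereal (C * s)"
  proof (cases rule: ereal_ge_1_cases[OF q])
    case 1
    have "\<bar>\<tau> ^ nat \<bar>j - k\<bar> * x k\<bar> \<le> C * s" for k
    proof -
      have "\<bar>\<tau> ^ nat \<bar>j - k\<bar> * x k\<bar> \<le> \<bar>x k\<bar>"
        using pow[of "nat \<bar>j - k\<bar>"] by (simp add: abs_mult mult_left_le_one_le)
      also have "\<dots> \<le> C * s"
        using x[of k] mult_right_mono[OF C s] by simp
      finally show ?thesis .
    qed
    then show ?thesis unfolding 1 seq_norm_infinity by (simp add: SUP_least)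
  next
    case (2 r)
    have "power_sum r (\<lambda>k. \<tau> ^ nat \<bar>j - k\<bar> * x k)
        \<le> (\<integral>\<^sup>+ k. ennreal (\<tau> ^ nat \<bar>j - k\<bar>) * ennreal (s powr r) \<partial>count_space UNIV)"
      using 2 pow x by (intro order_trans[OF power_sum_le_weighted] nn_integral_mono mult_left_mono
          ennreal_leI powr_mono2) auto
    also have "\<dots> = (\<integral>\<^sup>+ k. ennreal (\<tau> ^ nat \<bar>j - k\<bar>) \<partial>count_space UNIV) * ennreal (s powr r)"
      by (simp add: nn_integral_multc)
    also have "\<dots> \<le> ennreal C * ennreal (s powr r)"
      unfolding C_def using \<tau> by (intro mult_right_mono nn_integral_geometric_int_le) auto
    also have "\<dots> \<le> ennreal (C powr r) * ennreal (s powr r)"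
      using C 2 by (intro mult_right_mono ennreal_leI le_powr_self) auto
    also have "\<dots> = ennreal ((C * s) powr r)"
      using C s by (simp add: powr_mult ennreal_mult)
    finally show ?thesis
      using 2 C s by (simp add: seq_norm_le_iff_power_sum_le)
  qed
  then show ?thesis by (simp add: C_def)
qed

lemma seq_norm_geometric_le:
  fixes x :: "int \<Rightarrow> real"
  assumes q: "1 \<le> q" and \<tau>: "0 \<le> \<tau>" "\<tau> < 1"
  shows "seq_norm q (\<lambda>k. \<tau> ^ nat \<bar>j - k\<bar> * x k) \<le> ereal (2 / (1 - \<tau>)) * seq_norm \<infinity> x"
proof (cases "seq_norm \<infinity> x")
  case (real s)
  then have "\<bar>x k\<bar> \<le> s" for k
    using abs_le_seq_norm[of \<infinity> x k] by simp
  then show ?thesis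
    using seq_norm_geometric_le_bound[OF q \<tau>] real by simp
next
  case PInf
  then show ?thesis using \<tau> by simp
next
  case MInf
  then show ?thesis using seq_norm_nonneg[of \<infinity> x] by simp
qed

lemma power_sum_sup_convolution_le:
  fixes D B :: "int \<Rightarrow> real"
  assumes r: "1 \<le> r" and \<sigma>: "0 \<le> \<sigma>" "\<sigma> < 1"
    and D: "\<And>j. ereal \<bar>D j\<bar> \<le> seq_norm (ereal r) (\<lambda>k. \<sigma> ^ nat \<bar>j - k\<bar> * B k)"
  shows "power_sum r D \<le> ennreal (2 / (1 - \<sigma>)) * power_sum r B"
proof -
  have "ennreal (\<bar>D j\<bar> powr r) \<le> power_sum r (\<lambda>k. \<sigma> ^ nat \<bar>j - k\<bar> * B k)" for j
    using D[of j] r by (simp add: abs_le_seq_norm_iff_powr_le_power_sum)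
  also have "power_sum r (\<lambda>k. \<sigma> ^ nat \<bar>j - k\<bar> * B k)
      \<le> (\<integral>\<^sup>+ k. ennreal (\<sigma> ^ nat \<bar>j - k\<bar>) * ennreal (\<bar>B k\<bar> powr r) \<partial>count_space UNIV)" for j
    using r \<sigma> by (intro power_sum_le_weighted) (auto intro: power_le_one)
  finally have "power_sum r D
      \<le> (\<integral>\<^sup>+ j. \<integral>\<^sup>+ k. ennreal (\<sigma> ^ nat \<bar>j - k\<bar>) * ennreal (\<bar>B k\<bar> powr r)
            \<partial>count_space UNIV \<partial>count_space UNIV)"
    unfolding power_sum_def by (intro nn_integral_mono)
  also have "\<dots> = (\<integral>\<^sup>+ k. ennreal (\<bar>B k\<bar> powr r) *
      (\<integral>\<^sup>+ j. ennreal (\<sigma> ^ nat \<bar>k - j\<bar>) \<partial>count_space UNIV) \<partial>count_space UNIV)"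
    by (subst nn_integral_count_space_nn_integral)
      (auto simp: nn_integral_cmult[symmetric] abs_minus_commute mult.commute intro!: nn_integral_cong)
  also have "\<dots> \<le> (\<integral>\<^sup>+ k. ennreal (\<bar>B k\<bar> powr r) * ennreal (2 / (1 - \<sigma>)) \<partial>count_space UNIV)"
    using \<sigma> by (intro nn_integral_mono mult_left_mono nn_integral_geometric_int_le) auto
  also have "\<dots> = ennreal (2 / (1 - \<sigma>)) * power_sum r B"
    unfolding power_sum_def by (simp add: nn_integral_cmult[symmetric] mult.commute)
  finally show ?thesis .
qed

lemma seq_norm_sup_convolution_le:
  fixes D B :: "int \<Rightarrow> real"
  assumes p: "1 \<le> p" and \<sigma>: "0 \<le> \<sigma>" "\<sigma> < 1"
    and D: "\<And>j. ereal \<bar>D j\<bar> \<le> seq_norm \<infinity> (\<lambda>k. \<sigma> ^ nat \<bar>j - k\<bar> * B k)"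
  shows "seq_norm p D \<le> ereal (2 / (1 - \<sigma>)) * seq_norm p B"
proof -
  define C where "C = 2 / (1 - \<sigma>)"
  have C: "1 \<le> C" using \<sigma> by (simp add: C_def field_simps)
  have "seq_norm p D \<le> ereal C * seq_norm p B"
  proof (cases rule: ereal_ge_1_cases[OF p])
    case 1
    have "seq_norm \<infinity> (\<lambda>k. \<sigma> ^ nat \<bar>j - k\<bar> * B k) \<le> seq_norm \<infinity> B" for j
      using \<sigma> by (intro seq_norm_mono) (auto simp: abs_mult mult_left_le_one_le power_le_one)
    then have "ereal \<bar>D j\<bar> \<le> seq_norm \<infinity> B" for j
      using D[of j] by (rule order_trans[rotated])
    then have "seq_norm \<infinity> D \<le> seq_norm \<infinity> B"
      unfolding seq_norm_infinity[of D] by (rule SUP_least)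
    then show ?thesis
      using order_trans[OF _ ereal_le_cmult_self[OF seq_norm_nonneg[of \<infinity> B] C]] 1 by simp
  next
    case (2 r)
    have "ereal \<bar>D j\<bar> \<le> seq_norm (ereal r) (\<lambda>k. \<sigma> ^ nat \<bar>j - k\<bar> * B k)" for j
      using order_trans[OF D[of j] seq_norm_infinity_le[of "ereal r"]] 2 by simp
    then have "power_sum r D \<le> ennreal C * power_sum r B"
      unfolding C_def using 2 \<sigma> by (intro power_sum_sup_convolution_le) auto
    also have "\<dots> \<le> ennreal (C powr r) * power_sum r B"
      using C 2 by (intro mult_right_mono ennreal_leI le_powr_self) auto
    finally show ?thesis
      unfolding 2 using 2 C by (intro seq_norm_le_cmult_if_power_sum_le) auto
  qed
  then show ?thesis by (simp add: C_def)
qed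

section \<open>Discretizing sequences\<close>

lemma strongly_increasing_pos: "strongly_increasing a \<Longrightarrow> 0 < a k"
  unfolding strongly_increasing_def by auto

lemma strongly_increasing_step:
  assumes "strongly_increasing a"
  shows "2 * a k \<le> a (k + 1)"
  using assms unfolding strongly_increasing_def by (auto simp: field_simps)

lemma strongly_decreasing_step:
  assumes "strongly_decreasing a"
  shows "a (k + 1) \<le> a k / 2"
  using assms unfolding strongly_decreasing_def by (auto simp: field_simps)

lemma strongly_increasing_geometric:
  assumes "strongly_increasing a"
  shows "2 ^ n * a k \<le> a (k + int n)"
proof (induction n)
  case (Suc n)
  have "2 ^ Suc n * a k \<le> 2 * a (k + int n)" using Suc by simp
  also have "\<dots> \<le> a (k + int n + 1)" by (rule strongly_increasing_step[OF assms])
  finally show ?case by (simp add: ac_simps)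
qed simp

lemma strongly_decreasing_geometric:
  assumes "strongly_decreasing a"
  shows "a (k + int n) \<le> (1 / 2) ^ n * a k"
proof (induction n)
  case (Suc n)
  have "a (k + int (Suc n)) \<le> a (k + int n) / 2"
    using strongly_decreasing_step[OF assms, of "k + int n"] by (simp add: ac_simps)
  also have "\<dots> \<le> (1 / 2) ^ Suc n * a k" using Suc by simp
  finally show ?case .
qed simp

lemma strongly_increasing_bracket:
  assumes a: "strongly_increasing a" and u: "0 < u"
  obtains k where "a k \<le> u" and "u < a (k + 1)"
proof -
  have a0: "0 < a 0" by (rule strongly_increasing_pos[OF a])
  obtain m :: nat where m: "a 0 / u < 2 ^ m" using real_arch_pow[of 2 "a 0 / u"] by auto
  have "2 ^ m * a (- int m) \<le> a 0"
    using strongly_increasing_geometric[OF a, of m "- int m"] by simp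
  also have "a 0 < 2 ^ m * u" using m u by (simp add: field_simps)
  finally have below: "a (- int m) \<le> u"
    using mult_less_cancel_left_pos[of "2 ^ m" "a (- int m)" u] by simp
  obtain n :: nat where "u / a 0 < 2 ^ n" using real_arch_pow[of 2 "u / a 0"] by auto
  then have "u < a (- int m + int (m + n))"
    using strongly_increasing_geometric[OF a, of n 0] a0 by (simp add: field_simps)
  then obtain l :: nat where l: "u < a (- int m + int l)"
    and least: "\<And>l'. l' < l \<Longrightarrow> \<not> u < a (- int m + int l')"
    using exists_least_iff[of "\<lambda>l. u < a (- int m + int l)"] by blast
  have "l \<noteq> 0"
  proof
    assume "l = 0"
    then show False using l below by simp
  qed
  then have "a (- int m + int (l - 1)) \<le> u" and "u < a (- int m + int (l - 1) + 1)"
    using least[of "l - 1"] l by (auto simp: of_nat_diff)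
  then show ?thesis using that by blast
qed

lemma strongly_increasing_bracket_fun:
  assumes a: "strongly_increasing a" and u: "\<And>i. 0 < u i"
  obtains \<kappa> where "\<And>i. a (\<kappa> i) \<le> u i \<and> u i < a (\<kappa> i + 1)"
proof -
  have "\<forall>i. \<exists>k. a k \<le> u i \<and> u i < a (k + 1)"
  proof
    fix i
    obtain k where "a k \<le> u i" "u i < a (k + 1)"
      by (rule strongly_increasing_bracket[OF a u])
    then show "\<exists>k. a k \<le> u i \<and> u i < a (k + 1)" by blast
  qed
  then obtain \<kappa> where "\<forall>i. a (\<kappa> i) \<le> u i \<and> u i < a (\<kappa> i + 1)"
    by (auto dest: choice)
  then show ?thesis using that by blast
qed

lemma nd_quasi_concave_pos: "nd_quasi_concave \<phi> \<Longrightarrow> 0 < x \<Longrightarrow> 0 < \<phi> x"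
  unfolding nd_quasi_concave_def by auto

lemma nd_quasi_concave_mono: "nd_quasi_concave \<phi> \<Longrightarrow> 0 < s \<Longrightarrow> s \<le> x \<Longrightarrow> \<phi> s \<le> \<phi> x"
  unfolding nd_quasi_concave_def by auto

lemma nd_quasi_concave_div_antimono:
  "nd_quasi_concave \<phi> \<Longrightarrow> 0 < s \<Longrightarrow> s \<le> x \<Longrightarrow> \<phi> x / x \<le> \<phi> s / s"
  unfolding nd_quasi_concave_def by auto

lemma discretizing_seq_pos: "discretizing_seq t \<phi> \<Longrightarrow> 0 < t k"
  unfolding discretizing_seq_def by (auto intro: strongly_increasing_pos)

lemma discretizing_seq_div_le_below:
  assumes \<phi>: "nd_quasi_concave \<phi>" and t: "discretizing_seq t \<phi>"
    and u: "t k \<le> u" and j: "j \<le> k"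
  shows "t j / u / \<phi> (t j) \<le> (1 / 2) ^ nat (k - j) / \<phi> u"
proof -
  have \<phi>t_div_dec: "strongly_decreasing (\<lambda>k. \<phi> (t k) / t k)"
    using t unfolding discretizing_seq_def by auto
  have tpos: "0 < t i" for i by (rule discretizing_seq_pos[OF t])
  have upos: "0 < u" using tpos[of k] u by linarith
  have "\<phi> u / u \<le> \<phi> (t k) / t k"
    by (rule nd_quasi_concave_div_antimono[OF \<phi> tpos u])
  also have "\<dots> \<le> (1 / 2) ^ nat (k - j) * (\<phi> (t j) / t j)"
    using strongly_decreasing_geometric[OF \<phi>t_div_dec, of j "nat (k - j)"] j by simp
  finally show ?thesis
    using upos tpos[of j] nd_quasi_concave_pos[OF \<phi> upos] nd_quasi_concave_pos[OF \<phi> tpos, of j]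
    by (simp add: field_simps)
qed

lemma discretizing_seq_inverse_le_above:
  assumes \<phi>: "nd_quasi_concave \<phi>" and t: "discretizing_seq t \<phi>"
    and u: "0 < u" "u \<le> t (k + 1)" and j: "k < j"
  shows "1 / \<phi> (t j) \<le> (1 / 2) ^ nat (j - k - 1) / \<phi> u"
proof -
  have \<phi>t_inc: "strongly_increasing (\<lambda>k. \<phi> (t k))"
    using t unfolding discretizing_seq_def by auto
  have "2 ^ nat (j - k - 1) * \<phi> u \<le> 2 ^ nat (j - k - 1) * \<phi> (t (k + 1))"
    using nd_quasi_concave_mono[OF \<phi> u] by simp
  also have "\<dots> \<le> \<phi> (t j)"
    using strongly_increasing_geometric[OF \<phi>t_inc, of "nat (j - k - 1)" "k + 1"] j by simp
  finally show ?thesis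
    using nd_quasi_concave_pos[OF \<phi> u(1)] nd_quasi_concave_pos[OF \<phi> discretizing_seq_pos[OF t, of j]]
    by (simp add: field_simps power_one_over)
qed

lemma discretizing_seq_min_div_le_geometric:
  assumes \<phi>: "nd_quasi_concave \<phi>" and t: "discretizing_seq t \<phi>"
    and u: "t k \<le> u" "u \<le> t (k + 1)"
  shows "min 1 (t j / u) / \<phi> (t j) \<le> 2 * (1 / 2) ^ nat \<bar>j - k\<bar> / \<phi> u"
proof -
  have upos: "0 < u" using discretizing_seq_pos[OF t, of k] u by linarith
  have \<phi>u: "0 < \<phi> u" by (rule nd_quasi_concave_pos[OF \<phi> upos])
  have \<phi>tj: "0 < \<phi> (t j)"
    by (rule nd_quasi_concave_pos[OF \<phi> discretizing_seq_pos[OF t]])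
  show ?thesis
  proof (cases "j \<le> k")
    case True
    have "min 1 (t j / u) / \<phi> (t j) \<le> t j / u / \<phi> (t j)"
      using \<phi>tj by (intro divide_right_mono) auto
    also have "\<dots> \<le> (1 / 2) ^ nat (k - j) / \<phi> u"
      by (rule discretizing_seq_div_le_below[OF \<phi> t u(1) True])
    also have "\<dots> \<le> 2 * (1 / 2) ^ nat \<bar>j - k\<bar> / \<phi> u"
      using True \<phi>u by (simp add: divide_right_mono)
    finally show ?thesis .
  next
    case False
    have "min 1 (t j / u) / \<phi> (t j) \<le> 1 / \<phi> (t j)"
      using \<phi>tj by (intro divide_right_mono) auto
    also have "\<dots> \<le> (1 / 2) ^ nat (j - k - 1) / \<phi> u"
      using False by (intro discretizing_seq_inverse_le_above[OF \<phi> t upos u(2)]) simp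
    also have "\<dots> = 2 * (1 / 2) ^ nat \<bar>j - k\<bar> / \<phi> u"
    proof -
      have "nat \<bar>j - k\<bar> = Suc (nat (j - k - 1))" using False by simp
      then show ?thesis by simp
    qed
    finally show ?thesis .
  qed
qed

lemma discretizing_seq_inverse_le_neighbours:
  assumes \<phi>: "nd_quasi_concave \<phi>" and t: "discretizing_seq t \<phi>"
    and u: "t k \<le> u" "u \<le> t (k + 1)"
  shows "1 / \<phi> u \<le> 2 * (min 1 (t k / u) / \<phi> (t k) + min 1 (t (k + 1) / u) / \<phi> (t (k + 1)))"
proof -
  obtain Z1 :: "int set" where Z1:
    "k \<in> Z1 \<Longrightarrow> \<phi> (t (k + 1)) \<le> 2 * \<phi> (t k)"
    "k \<notin> Z1 \<Longrightarrow> \<phi> (t k) / t k \<le> 2 * (\<phi> (t (k + 1)) / t (k + 1))"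
    using t unfolding discretizing_seq_def by blast
  have tpos: "0 < t i" for i by (rule discretizing_seq_pos[OF t])
  have upos: "0 < u" using tpos[of k] u by linarith
  have \<phi>u: "0 < \<phi> u" by (rule nd_quasi_concave_pos[OF \<phi> upos])
  have \<phi>t: "0 < \<phi> (t i)" for i by (rule nd_quasi_concave_pos[OF \<phi> tpos])
  have min_k: "min 1 (t k / u) = t k / u" and min_k1: "min 1 (t (k + 1) / u) = 1"
    using u upos by (auto simp: min_def field_simps)
  have nonneg: "0 \<le> t k / u / \<phi> (t k)" "0 \<le> 1 / \<phi> (t (k + 1))"
    using tpos[of k] upos \<phi>t[of k] \<phi>t[of "k + 1"] by auto
  have "1 / \<phi> u \<le> 2 * (1 / \<phi> (t (k + 1))) \<or> 1 / \<phi> u \<le> 2 * (t k / u / \<phi> (t k))"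
  proof (cases "k \<in> Z1")
    case True
    have "\<phi> (t (k + 1)) \<le> 2 * \<phi> u"
      using Z1(1)[OF True] nd_quasi_concave_mono[OF \<phi> tpos u(1)] by simp
    then have "1 / \<phi> u \<le> 2 * (1 / \<phi> (t (k + 1)))"
      using \<phi>u \<phi>t[of "k + 1"] by (simp add: field_simps)
    then show ?thesis ..
  next
    case False
    have "\<phi> (t k) / t k \<le> 2 * (\<phi> u / u)"
      using Z1(2)[OF False] nd_quasi_concave_div_antimono[OF \<phi> upos u(2)] by simp
    then have "1 / \<phi> u \<le> 2 * (t k / u / \<phi> (t k))"
      using \<phi>u \<phi>t[of k] tpos[of k] upos by (simp add: field_simps)
    then show ?thesis ..
  qed
  moreover have "x \<le> 2 * b \<or> x \<le> 2 * a \<Longrightarrow> 0 \<le> a \<Longrightarrow> 0 \<le> b \<Longrightarrow> x \<le> 2 * (a + b)"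
    for x a b :: real
    by (auto simp: distrib_left)
  ultimately show ?thesis unfolding min_k min_k1 using nonneg by blast
qed

lemma min_eq_times_min_1:
  fixes x0 x1 s :: real
  assumes "0 < x0" and "0 < x1"
  shows "min x0 (s * x1) = x0 * min 1 (s / (x0 / x1))"
proof -
  have "s * x1 = x0 * (s / (x0 / x1))" using assms by simp
  then show ?thesis using assms by (simp add: min_mult_distrib_left)
qed

lemma discretizing_seq_min_weight_le_geometric:
  assumes \<phi>: "nd_quasi_concave \<phi>" and t: "discretizing_seq t \<phi>"
    and x: "0 < x0" "0 < x1" and k: "t k \<le> x0 / x1" "x0 / x1 \<le> t (k + 1)"
  shows "min x0 (t j * x1) / \<phi> (t j) \<le> 2 * (1 / 2) ^ nat \<bar>j - k\<bar> * (x0 / \<phi> (x0 / x1))"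
proof -
  have "x0 * (min 1 (t j / (x0 / x1)) / \<phi> (t j)) \<le> x0 * (2 * (1 / 2) ^ nat \<bar>j - k\<bar> / \<phi> (x0 / x1))"
    using discretizing_seq_min_div_le_geometric[OF \<phi> t k] x by (intro mult_left_mono) auto
  then show ?thesis unfolding min_eq_times_min_1[OF x] by (simp add: mult_ac)
qed

lemma discretizing_seq_weight_le_neighbours:
  assumes \<phi>: "nd_quasi_concave \<phi>" and t: "discretizing_seq t \<phi>"
    and x: "0 < x0" "0 < x1" and k: "t k \<le> x0 / x1" "x0 / x1 \<le> t (k + 1)"
  shows "x0 / \<phi> (x0 / x1)
    \<le> 2 * (min x0 (t k * x1) / \<phi> (t k) + min x0 (t (k + 1) * x1) / \<phi> (t (k + 1)))"
proof -
  have "x0 * (1 / \<phi> (x0 / x1)) \<le> x0 * (2 * (min 1 (t k / (x0 / x1)) / \<phi> (t k)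
      + min 1 (t (k + 1) / (x0 / x1)) / \<phi> (t (k + 1))))"
    using discretizing_seq_inverse_le_neighbours[OF \<phi> t k] x by (intro mult_left_mono) auto
  then show ?thesis unfolding min_eq_times_min_1[OF x] by (simp add: algebra_simps)
qed

section \<open>The K-functional of a couple of weighted \<open>l\<^sub>q\<close> spaces\<close>

lemma weighted_lq_norm_nonneg: "1 \<le> q \<Longrightarrow> 0 \<le> weighted_lq_norm q w x"
  unfolding weighted_lq_norm_def by (rule seq_norm_nonneg)

lemma K_functional_nonneg:
  assumes "\<And>x. 0 \<le> N0 x" and "\<And>x. 0 \<le> N1 x" and "0 \<le> t"
  shows "0 \<le> K_functional N0 N1 t a"
  unfolding K_functional_def using assms by (auto intro!: Inf_greatest)

lemma K_functional_finite:
  assumes "in_sum_space N0 N1 a" and "\<And>x. 0 \<le> N0 x" and "\<And>x. 0 \<le> N1 x"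
  shows "K_functional N0 N1 t a < \<infinity>"
proof -
  obtain x0 x1 where x: "a = (\<lambda>i. x0 i + x1 i)" "N0 x0 < \<infinity>" "N1 x1 < \<infinity>"
    using assms(1) unfolding in_sum_space_def by blast
  have "K_functional N0 N1 t a \<le> N0 x0 + ereal t * N1 x1"
    unfolding K_functional_def using x by (intro Inf_lower) blast
  also have "\<dots> < \<infinity>"
    using x assms(2,3)[of x0] assms(3)[of x1]
    by (cases "N0 x0"; cases "N1 x1") auto
  finally show ?thesis .
qed

lemma K_functional_weighted_lq_ge:
  assumes q: "1 \<le> q" and t: "0 < t" and w: "\<And>i. 0 < w0 i" "\<And>i. 0 < w1 i"
  shows "seq_norm q (\<lambda>i. a i * min (w0 i) (t * w1 i))
           \<le> 4 * K_functional (weighted_lq_norm q w0) (weighted_lq_norm q w1) t a"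
proof -
  let ?G = "seq_norm q (\<lambda>i. a i * min (w0 i) (t * w1 i))"
  have "ereal (1 / 4) * ?G \<le> K_functional (weighted_lq_norm q w0) (weighted_lq_norm q w1) t a"
    unfolding K_functional_def
  proof (rule Inf_greatest)
    fix e
    assume "e \<in> {weighted_lq_norm q w0 x0 + ereal t * weighted_lq_norm q w1 x1 | x0 x1.
      a = (\<lambda>i. x0 i + x1 i) \<and> weighted_lq_norm q w0 x0 < \<infinity> \<and> weighted_lq_norm q w1 x1 < \<infinity>}"
    then obtain x0 x1 where a: "a = (\<lambda>i. x0 i + x1 i)"
      and e: "e = weighted_lq_norm q w0 x0 + ereal t * weighted_lq_norm q w1 x1"
      by blast
    have "\<bar>a i * min (w0 i) (t * w1 i)\<bar> \<le> \<bar>x0 i * w0 i\<bar> + \<bar>t * (x1 i * w1 i)\<bar>" for i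
    proof -
      have "\<bar>a i * min (w0 i) (t * w1 i)\<bar> \<le> (\<bar>x0 i\<bar> + \<bar>x1 i\<bar>) * min (w0 i) (t * w1 i)"
        unfolding a using w[of i] t by (simp add: abs_mult mult_right_mono abs_triangle_ineq)
      also have "\<dots> \<le> \<bar>x0 i\<bar> * w0 i + \<bar>x1 i\<bar> * (t * w1 i)"
        by (simp add: distrib_right add_mono mult_left_mono)
      finally show ?thesis using w[of i] t by (simp add: abs_mult mult_ac)
    qed
    then have "?G \<le> 4 * (seq_norm q (\<lambda>i. x0 i * w0 i) + seq_norm q (\<lambda>i. t * (x1 i * w1 i)))"
      by (rule seq_norm_quasi_triangle[OF q])
    then have "?G \<le> 4 * e"
      unfolding e by (simp add: weighted_lq_norm_def seq_norm_cmult[OF q t])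
    then have "ereal (1 / 4) * ?G \<le> ereal (1 / 4) * (4 * e)"
      by (intro ereal_mult_left_mono) auto
    then show "ereal (1 / 4) * ?G \<le> e"
      by (simp add: mult.assoc[symmetric])
  qed
  then have "4 * (ereal (1 / 4) * ?G) \<le> 4 * K_functional (weighted_lq_norm q w0) (weighted_lq_norm q w1) t a"
    by (intro ereal_mult_left_mono) auto
  then show ?thesis by (simp add: mult.assoc[symmetric])
qed

lemma K_functional_weighted_lq_le:
  assumes q: "1 \<le> q" and t: "0 < t" and w: "\<And>i. 0 < w0 i" "\<And>i. 0 < w1 i"
    and G: "seq_norm q (\<lambda>i. a i * min (w0 i) (t * w1 i)) < \<infinity>"
  shows "in_sum_space (weighted_lq_norm q w0) (weighted_lq_norm q w1) a"
    and "K_functional (weighted_lq_norm q w0) (weighted_lq_norm q w1) t a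
           \<le> 2 * seq_norm q (\<lambda>i. a i * min (w0 i) (t * w1 i))"
proof -
  let ?G = "seq_norm q (\<lambda>i. a i * min (w0 i) (t * w1 i))"
  define x0 where "x0 i = (if w0 i \<le> t * w1 i then a i else 0)" for i
  define x1 where "x1 i = (if w0 i \<le> t * w1 i then 0 else a i)" for i
  have a: "a = (\<lambda>i. x0 i + x1 i)" unfolding x0_def x1_def by auto
  have n0: "weighted_lq_norm q w0 x0 \<le> ?G"
    unfolding weighted_lq_norm_def using w
    by (intro seq_norm_mono[OF q]) (auto simp: x0_def abs_mult min_def)
  have "seq_norm q (\<lambda>i. t * (x1 i * w1 i)) \<le> ?G"
    using w t by (intro seq_norm_mono[OF q]) (auto simp: x1_def abs_mult min_def)
  then have n1: "ereal t * weighted_lq_norm q w1 x1 \<le> ?G"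
    unfolding weighted_lq_norm_def seq_norm_cmult[OF q t] .
  have f0: "weighted_lq_norm q w0 x0 < \<infinity>" using n0 G by (rule le_less_trans)
  have f1: "weighted_lq_norm q w1 x1 < \<infinity>"
    using n1 G t by (cases "weighted_lq_norm q w1 x1") auto
  show "in_sum_space (weighted_lq_norm q w0) (weighted_lq_norm q w1) a"
    unfolding in_sum_space_def using a f0 f1 by blast
  have "K_functional (weighted_lq_norm q w0) (weighted_lq_norm q w1) t a
        \<le> weighted_lq_norm q w0 x0 + ereal t * weighted_lq_norm q w1 x1"
    unfolding K_functional_def using a f0 f1 by (intro Inf_lower) blast
  also have "\<dots> \<le> ?G + ?G" by (rule add_mono[OF n0 n1])
  finally show "K_functional (weighted_lq_norm q w0) (weighted_lq_norm q w1) t a \<le> 2 * ?G"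
    using mult_2_ereal[of ?G] by simp
qed

section \<open>Mixed norms\<close>

definition lp_lq_norm :: "ereal \<Rightarrow> ereal \<Rightarrow> (int \<Rightarrow> int \<Rightarrow> real) \<Rightarrow> (int \<Rightarrow> real) \<Rightarrow> ereal" where
  "lp_lq_norm p q w a =
     (if \<forall>j. seq_norm q (\<lambda>i. a i * w j i) < \<infinity>
      then seq_norm p (\<lambda>j. real_of_ereal (seq_norm q (\<lambda>i. a i * w j i)))
      else \<infinity>)"

lemma mixed_norm_eq_lp_lq_norm:
  "mixed_norm p q M u = lp_lq_norm p q (\<lambda>k i. if i \<in> M k then u i else 0)"
proof -
  have "(\<lambda>i. if i \<in> M k then a i * u i else 0) = (\<lambda>i. a i * (if i \<in> M k then u i else 0))" for k a
    by auto
  then show ?thesis unfolding mixed_norm_def lp_lq_norm_def by (simp add: fun_eq_iff)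
qed

lemma lp_lq_norm_nonneg: "1 \<le> p \<Longrightarrow> 0 \<le> lp_lq_norm p q w a"
  unfolding lp_lq_norm_def by (simp add: seq_norm_nonneg)

lemma lp_lq_norm_finiteE:
  assumes "lp_lq_norm p q w a < \<infinity>" and q: "1 \<le> q"
  obtains \<rho> where "\<And>j. seq_norm q (\<lambda>i. a i * w j i) = ereal (\<rho> j)" and "\<And>j. 0 \<le> \<rho> j"
    and "lp_lq_norm p q w a = seq_norm p \<rho>"
proof -
  have fin: "seq_norm q (\<lambda>i. a i * w j i) < \<infinity>" for j
    using assms(1) unfolding lp_lq_norm_def by (auto split: if_splits)
  define \<rho> where "\<rho> j = real_of_ereal (seq_norm q (\<lambda>i. a i * w j i))" for j
  have "seq_norm q (\<lambda>i. a i * w j i) = ereal (\<rho> j)" "0 \<le> \<rho> j" for j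
    using fin[of j] seq_norm_nonneg[OF q, of "\<lambda>i. a i * w j i"] unfolding \<rho>_def
    by (cases "seq_norm q (\<lambda>i. a i * w j i)"; simp)+
  moreover have "lp_lq_norm p q w a = seq_norm p \<rho>"
    using fin unfolding lp_lq_norm_def \<rho>_def by simp
  ultimately show ?thesis using that by blast
qed

lemma lp_lq_norm_le:
  assumes p: "1 \<le> p" and q: "1 \<le> q"
    and R: "\<And>j. seq_norm q (\<lambda>i. a i * w j i) \<le> ereal (R j)"
  shows "lp_lq_norm p q w a \<le> seq_norm p R"
proof -
  have fin: "seq_norm q (\<lambda>i. a i * w j i) < \<infinity>" for j
    using R[of j] by (rule le_less_trans) simp
  have "\<bar>real_of_ereal (seq_norm q (\<lambda>i. a i * w j i))\<bar> \<le> \<bar>R j\<bar>" for j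
    using R[of j] fin[of j] seq_norm_nonneg[OF q, of "\<lambda>i. a i * w j i"]
    by (cases "seq_norm q (\<lambda>i. a i * w j i)") auto
  then show ?thesis
    using fin unfolding lp_lq_norm_def by (simp add: seq_norm_mono[OF p])
qed

lemma lp_lq_norm_le_neighbours:
  assumes p: "1 \<le> p" and q: "1 \<le> q" and C: "0 < C"
    and v: "\<And>k i. \<bar>v k i\<bar> \<le> C * (\<bar>w k i\<bar> + \<bar>w (k + 1) i\<bar>)"
    and fin: "lp_lq_norm p q w a < \<infinity>"
  shows "lp_lq_norm p q v a \<le> ereal (32 * C) * lp_lq_norm p q w a"
proof -
  obtain \<rho> where \<rho>: "\<And>j. seq_norm q (\<lambda>i. a i * w j i) = ereal (\<rho> j)" "\<And>j. 0 \<le> \<rho> j"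
    and w_eq: "lp_lq_norm p q w a = seq_norm p \<rho>"
    using lp_lq_norm_finiteE[OF fin q] by blast
  have "seq_norm q (\<lambda>i. a i * v k i) \<le> ereal (4 * C * (\<rho> k + \<rho> (k + 1)))" for k
  proof -
    have "\<bar>a i * v k i\<bar> \<le> \<bar>C * (a i * w k i)\<bar> + \<bar>C * (a i * w (k + 1) i)\<bar>" for i
      using mult_left_mono[OF v[of k i] abs_ge_zero[of "a i"]] C
      by (simp add: abs_mult algebra_simps)
    then have "seq_norm q (\<lambda>i. a i * v k i)
        \<le> 4 * (seq_norm q (\<lambda>i. C * (a i * w k i)) + seq_norm q (\<lambda>i. C * (a i * w (k + 1) i)))"
      by (rule seq_norm_quasi_triangle[OF q])
    then show ?thesis
      using C by (simp add: seq_norm_cmult[OF q] \<rho> algebra_simps)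
  qed
  then have "lp_lq_norm p q v a \<le> seq_norm p (\<lambda>k. 4 * C * (\<rho> k + \<rho> (k + 1)))"
    by (rule lp_lq_norm_le[OF p q])
  also have "\<dots> \<le> 4 * (seq_norm p (\<lambda>k. 4 * C * \<rho> k) + seq_norm p (\<lambda>k. 4 * C * \<rho> (k + 1)))"
    using C \<rho>(2) by (intro seq_norm_quasi_triangle[OF p]) (simp add: algebra_simps)
  also have "seq_norm p (\<lambda>k. 4 * C * \<rho> (k + 1)) = seq_norm p (\<lambda>k. 4 * C * \<rho> k)"
    using seq_norm_shift[OF p, of "\<lambda>k. 4 * C * \<rho> k" 1] by simp
  also have "seq_norm p (\<lambda>k. 4 * C * \<rho> k) = ereal (4 * C) * lp_lq_norm p q w a"
    unfolding w_eq using C by (intro seq_norm_cmult[OF p]) simp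
  also have "4 * (ereal (4 * C) * lp_lq_norm p q w a + ereal (4 * C) * lp_lq_norm p q w a)
      = ereal (32 * C) * lp_lq_norm p q w a"
    using fin lp_lq_norm_nonneg[OF p, of q w a] by (cases "lp_lq_norm p q w a") auto
  finally show ?thesis .
qed

lemma seq_norm_fibred_geometric_le:
  fixes \<kappa> :: "int \<Rightarrow> int"
  assumes q: "1 \<le> q" and \<tau>: "0 \<le> \<tau>" "\<tau> < 1" and C: "0 < C"
    and f: "\<And>i. \<bar>f i\<bar> \<le> C * (\<tau> ^ nat \<bar>j - \<kappa> i\<bar>)\<^sup>2 * \<bar>c i\<bar>"
    and \<rho>: "\<And>k. seq_norm q (\<lambda>i. if \<kappa> i = k then c i else 0) \<le> ereal (\<rho> k)"
  shows "seq_norm q f \<le> ereal (C * (2 / (1 - \<tau>))) * seq_norm \<infinity> (\<lambda>k. \<tau> ^ nat \<bar>j - k\<bar> * \<rho> k)"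
proof -
  have "seq_norm q f \<le> seq_norm q (\<lambda>i. C * ((\<tau> ^ nat \<bar>j - \<kappa> i\<bar>)\<^sup>2 * c i))"
    using f C by (intro seq_norm_mono[OF q]) (simp add: abs_mult mult.assoc)
  also have "\<dots> = ereal C * seq_norm q (\<lambda>i. (\<tau> ^ nat \<bar>j - \<kappa> i\<bar>)\<^sup>2 * c i)"
    by (rule seq_norm_cmult[OF q C])
  also have "seq_norm q (\<lambda>i. (\<tau> ^ nat \<bar>j - \<kappa> i\<bar>)\<^sup>2 * c i)
      \<le> seq_norm q (\<lambda>k. \<tau> ^ nat \<bar>j - k\<bar> * (\<tau> ^ nat \<bar>j - k\<bar> * \<rho> k))"
    using seq_norm_fibres_le[OF q, of "\<lambda>k. (\<tau> ^ nat \<bar>j - k\<bar>)\<^sup>2" \<kappa> c \<rho>] \<rho>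
    by (simp add: power2_eq_square mult.assoc)
  also have "\<dots> \<le> ereal (2 / (1 - \<tau>)) * seq_norm \<infinity> (\<lambda>k. \<tau> ^ nat \<bar>j - k\<bar> * \<rho> k)"
    by (rule seq_norm_geometric_le[OF q \<tau>])
  finally show ?thesis
    using C by (simp add: ereal_mult_left_mono mult.assoc[symmetric])
qed

lemma seq_norm_infinity_geometric_le:
  assumes "0 \<le> \<tau>" and "\<tau> \<le> 1"
  shows "seq_norm \<infinity> (\<lambda>k. \<tau> ^ nat \<bar>j - k\<bar> * \<rho> k) \<le> seq_norm \<infinity> \<rho>"
  using assms by (intro seq_norm_mono) (auto simp: abs_mult mult_left_le_one_le power_le_one)

text \<open>Half of the geometric decay of the kernel pays for the \<open>l\<^sub>q\<close> sum over the blocks,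
  the other half for the \<open>l\<^sub>p\<close> sum over the rows.\<close>

lemma lp_lq_norm_le_geometric:
  fixes \<kappa> :: "int \<Rightarrow> int"
  assumes p: "1 \<le> p" and q: "1 \<le> q" and \<sigma>: "0 \<le> \<sigma>" "\<sigma> < 1" and C: "0 < C"
    and w: "\<And>j i. \<bar>w j i\<bar> \<le> C * \<sigma> ^ nat \<bar>j - \<kappa> i\<bar> * \<bar>v (\<kappa> i) i\<bar>"
    and fin: "lp_lq_norm p q v a < \<infinity>"
  shows "lp_lq_norm p q w a \<le> ereal (C * (2 / (1 - sqrt \<sigma>))\<^sup>2) * lp_lq_norm p q v a"
proof -
  obtain \<rho> where \<rho>: "\<And>k. seq_norm q (\<lambda>i. a i * v k i) = ereal (\<rho> k)"
    and v_eq: "lp_lq_norm p q v a = seq_norm p \<rho>"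
    by (rule lp_lq_norm_finiteE[OF fin q]) blast
  define \<tau> where "\<tau> = sqrt \<sigma>"
  define K where "K = 2 / (1 - \<tau>)"
  have \<tau>: "0 \<le> \<tau>" "\<tau> < 1" using \<sigma> by (auto simp: \<tau>_def)
  have K: "0 < K" using \<tau> by (simp add: K_def)
  have "\<sigma> = \<tau> * \<tau>" using \<sigma> by (simp add: \<tau>_def)
  then have \<sigma>_pow: "\<sigma> ^ n = (\<tau> ^ n)\<^sup>2" for n by (simp add: power_mult_distrib power2_eq_square)
  define S where "S j = seq_norm \<infinity> (\<lambda>k. \<tau> ^ nat \<bar>j - k\<bar> * \<rho> k)" for j
  have S_le: "S j \<le> seq_norm p \<rho>" for j
    unfolding S_def using \<tau> seq_norm_infinity_geometric_le seq_norm_infinity_le[OF p]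
    by (meson less_imp_le order_trans)
  have S_finite: "S j < \<infinity>" for j
  proof -
    have "seq_norm p \<rho> < \<infinity>" using fin v_eq by simp
    then show ?thesis by (rule le_less_trans[OF S_le])
  qed
  define D where "D j = real_of_ereal (S j)" for j
  have D: "S j = ereal (D j)" "0 \<le> D j" for j
    using S_finite[of j] seq_norm_nonneg[of \<infinity> "\<lambda>k. \<tau> ^ nat \<bar>j - k\<bar> * \<rho> k"]
    unfolding D_def S_def by (cases "seq_norm \<infinity> (\<lambda>k. \<tau> ^ nat \<bar>j - k\<bar> * \<rho> k)"; simp)+
  have "seq_norm q (\<lambda>i. a i * w j i) \<le> ereal (C * K * D j)" for j
  proof -
    have "\<bar>a i * w j i\<bar> \<le> C * (\<tau> ^ nat \<bar>j - \<kappa> i\<bar>)\<^sup>2 * \<bar>a i * v (\<kappa> i) i\<bar>" for i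
      using mult_left_mono[OF w[of j i] abs_ge_zero[of "a i"]] by (simp add: \<sigma>_pow abs_mult mult_ac)
    moreover have "seq_norm q (\<lambda>i. if \<kappa> i = k then a i * v (\<kappa> i) i else 0) \<le> ereal (\<rho> k)" for k
      unfolding \<rho>[symmetric] by (intro seq_norm_mono[OF q]) simp
    ultimately have "seq_norm q (\<lambda>i. a i * w j i) \<le> ereal (C * K) * S j"
      unfolding K_def S_def by (rule seq_norm_fibred_geometric_le[OF q \<tau> C])
    then show ?thesis by (simp add: D)
  qed
  then have "lp_lq_norm p q w a \<le> seq_norm p (\<lambda>j. C * K * D j)"
    by (rule lp_lq_norm_le[OF p q])
  also have "\<dots> = ereal (C * K) * seq_norm p D"
    using C K by (intro seq_norm_cmult[OF p]) simp
  also have "\<dots> \<le> ereal (C * K) * (ereal K * seq_norm p \<rho>)"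
    using seq_norm_sup_convolution_le[OF p \<tau>, of D \<rho>] C K D
    by (intro ereal_mult_left_mono) (auto simp: K_def S_def)
  also have "\<dots> = ereal (C * K\<^sup>2) * lp_lq_norm p q v a"
    by (simp add: v_eq power2_eq_square mult.assoc[symmetric])
  finally show ?thesis by (simp only: K_def \<tau>_def)
qed

section \<open>Equivalence of the norms\<close>

lemma equiv_spacesI:
  assumes C1: "0 < C1" and C2: "0 < C2" and nonneg: "\<And>a. 0 \<le> N1 a" "\<And>a. 0 \<le> N2 a"
    and le1: "\<And>a. N1 a < \<infinity> \<Longrightarrow> N2 a \<le> ereal C1 * N1 a"
    and le2: "\<And>a. N2 a < \<infinity> \<Longrightarrow> N1 a \<le> ereal C2 * N2 a"
  shows "equiv_spaces N1 N2"
proof -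
  have fin: "N1 a < \<infinity> \<longleftrightarrow> N2 a < \<infinity>" for a
    using le_less_trans[OF le1 ereal_cmult_less_infinity] le_less_trans[OF le2 ereal_cmult_less_infinity]
      C1 C2 by force
  have "ereal C1 * N1 a \<le> ereal (max C1 C2) * N1 a" "ereal C2 * N2 a \<le> ereal (max C1 C2) * N2 a" for a
    using nonneg by (auto intro: ereal_mult_right_mono)
  then have "N1 a < \<infinity> \<Longrightarrow> N1 a \<le> ereal (max C1 C2) * N2 a \<and> N2 a \<le> ereal (max C1 C2) * N1 a" for a
    using le1[of a] le2[of a] fin[of a] order_trans by blast
  then show ?thesis
    unfolding equiv_spaces_def using fin C1 by (intro conjI exI[of _ "max C1 C2"]) auto
qed

lemma equiv_spaces_trans:
  assumes "equiv_spaces N1 N2" and "equiv_spaces N2 N3"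
    and "\<And>a. 0 \<le> N1 a" and "\<And>a. 0 \<le> N3 a"
  shows "equiv_spaces N1 N3"
proof -
  obtain C where C: "0 < C" "\<And>a. N1 a < \<infinity> \<longleftrightarrow> N2 a < \<infinity>"
    "\<And>a. N1 a < \<infinity> \<Longrightarrow> N1 a \<le> ereal C * N2 a \<and> N2 a \<le> ereal C * N1 a"
    using assms(1) unfolding equiv_spaces_def by blast
  obtain D where D: "0 < D" "\<And>a. N2 a < \<infinity> \<longleftrightarrow> N3 a < \<infinity>"
    "\<And>a. N2 a < \<infinity> \<Longrightarrow> N2 a \<le> ereal D * N3 a \<and> N3 a \<le> ereal D * N2 a"
    using assms(2) unfolding equiv_spaces_def by blast
  have chain: "x \<le> ereal A * y \<Longrightarrow> y \<le> ereal B * z \<Longrightarrow> x \<le> ereal (A * B) * z"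
    if "0 \<le> A" for x y z A B
  proof -
    assume "x \<le> ereal A * y" "y \<le> ereal B * z"
    moreover have "ereal A * y \<le> ereal A * (ereal B * z)"
      using that \<open>y \<le> ereal B * z\<close> by (intro ereal_mult_left_mono) auto
    ultimately show ?thesis by (simp add: mult.assoc[symmetric])
  qed
  show ?thesis
  proof (rule equiv_spacesI[of "D * C" "C * D"])
    show "N3 a \<le> ereal (D * C) * N1 a" if "N1 a < \<infinity>" for a
      using chain[of D "N3 a" "N2 a" C "N1 a"] C D that by auto
    show "N1 a \<le> ereal (C * D) * N3 a" if "N3 a < \<infinity>" for a
      using chain[of C "N1 a" "N2 a" D "N3 a"] C D that by auto
  qed (use assms C D in auto)
qed

lemma interp_norm_nonneg: "1 \<le> p \<Longrightarrow> 0 \<le> interp_norm N0 N1 \<phi> p t a"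
  unfolding interp_norm_def by (simp add: seq_norm_nonneg)

lemma lp_lq_norm_le_interp_norm:
  assumes p: "1 \<le> p" and q: "1 \<le> q" and w: "\<And>i. 0 < w0 i" "\<And>i. 0 < w1 i"
    and t: "\<And>j. 0 < t j" and \<phi>: "\<And>j. 0 < \<phi> (t j)"
    and fin: "interp_norm (weighted_lq_norm q w0) (weighted_lq_norm q w1) \<phi> p t a < \<infinity>"
  shows "lp_lq_norm p q (\<lambda>j i. min (w0 i) (t j * w1 i) / \<phi> (t j)) a
    \<le> ereal 4 * interp_norm (weighted_lq_norm q w0) (weighted_lq_norm q w1) \<phi> p t a"
proof -
  let ?K = "\<lambda>j. K_functional (weighted_lq_norm q w0) (weighted_lq_norm q w1) (t j) a"
  have sum: "in_sum_space (weighted_lq_norm q w0) (weighted_lq_norm q w1) a"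
    using fin unfolding interp_norm_def by (auto split: if_splits)
  have K_real: "?K j = ereal (real_of_ereal (?K j))" for j
    using K_functional_finite[OF sum weighted_lq_norm_nonneg[OF q] weighted_lq_norm_nonneg[OF q]]
      K_functional_nonneg[OF weighted_lq_norm_nonneg[OF q] weighted_lq_norm_nonneg[OF q], of "t j"] t[of j]
    by (cases "?K j") auto
  have "seq_norm q (\<lambda>i. a i * (min (w0 i) (t j * w1 i) / \<phi> (t j)))
      \<le> ereal (4 * (real_of_ereal (?K j) / \<phi> (t j)))" for j
  proof -
    have "seq_norm q (\<lambda>i. a i * (min (w0 i) (t j * w1 i) / \<phi> (t j)))
        = ereal (1 / \<phi> (t j)) * seq_norm q (\<lambda>i. a i * min (w0 i) (t j * w1 i))"
      using seq_norm_divide[OF q \<phi>] by (simp only: times_divide_eq_right)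
    also have "\<dots> \<le> ereal (1 / \<phi> (t j)) * (4 * ?K j)"
      using K_functional_weighted_lq_ge[OF q t w] \<phi>[of j] by (intro ereal_mult_left_mono) auto
    also have "\<dots> = ereal (4 * (real_of_ereal (?K j) / \<phi> (t j)))"
      by (subst K_real) simp
    finally show ?thesis .
  qed
  then have "lp_lq_norm p q (\<lambda>j i. min (w0 i) (t j * w1 i) / \<phi> (t j)) a
      \<le> seq_norm p (\<lambda>j. 4 * (real_of_ereal (?K j) / \<phi> (t j)))"
    by (rule lp_lq_norm_le[OF p q])
  also have "\<dots> = ereal 4 * interp_norm (weighted_lq_norm q w0) (weighted_lq_norm q w1) \<phi> p t a"
    using sum seq_norm_cmult[OF p, of 4 "\<lambda>j. real_of_ereal (?K j) / \<phi> (t j)"]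
    unfolding interp_norm_def by simp
  finally show ?thesis .
qed

lemma interp_norm_le_lp_lq_norm:
  assumes p: "1 \<le> p" and q: "1 \<le> q" and w: "\<And>i. 0 < w0 i" "\<And>i. 0 < w1 i"
    and t: "\<And>j. 0 < t j" and \<phi>: "\<And>j. 0 < \<phi> (t j)"
    and fin: "lp_lq_norm p q (\<lambda>j i. min (w0 i) (t j * w1 i) / \<phi> (t j)) a < \<infinity>"
  shows "interp_norm (weighted_lq_norm q w0) (weighted_lq_norm q w1) \<phi> p t a
    \<le> ereal 2 * lp_lq_norm p q (\<lambda>j i. min (w0 i) (t j * w1 i) / \<phi> (t j)) a"
proof -
  let ?K = "\<lambda>j. K_functional (weighted_lq_norm q w0) (weighted_lq_norm q w1) (t j) a"
  let ?G = "\<lambda>j. seq_norm q (\<lambda>i. a i * min (w0 i) (t j * w1 i))"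
  obtain \<rho> where \<rho>: "\<And>j. seq_norm q (\<lambda>i. a i * (min (w0 i) (t j * w1 i) / \<phi> (t j))) = ereal (\<rho> j)"
    and \<rho>_nonneg: "\<And>j. 0 \<le> \<rho> j"
    and L_eq: "lp_lq_norm p q (\<lambda>j i. min (w0 i) (t j * w1 i) / \<phi> (t j)) a = seq_norm p \<rho>"
    by (rule lp_lq_norm_finiteE[OF fin q]) blast
  have G: "?G j = ereal (\<phi> (t j) * \<rho> j)" for j
    using \<rho>[of j] \<phi>[of j] seq_norm_divide[OF q \<phi>[of j], of "\<lambda>i. a i * min (w0 i) (t j * w1 i)"]
    by (cases "?G j") (auto simp: field_simps)
  have sum: "in_sum_space (weighted_lq_norm q w0) (weighted_lq_norm q w1) a"
    using K_functional_weighted_lq_le(1)[of q "t 0" w0 w1 a] q t w G[of 0] by simp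
  have K_nonneg: "0 \<le> ?K j" for j
    using t[of j] by (intro K_functional_nonneg weighted_lq_norm_nonneg[OF q]) auto
  have "\<bar>real_of_ereal (?K j) / \<phi> (t j)\<bar> \<le> \<bar>2 * \<rho> j\<bar>" for j
  proof -
    have "?K j \<le> ereal (2 * (\<phi> (t j) * \<rho> j))"
      using K_functional_weighted_lq_le(2)[of q "t j" w0 w1 a] q t w G[of j] by simp
    then have "real_of_ereal (?K j) \<le> 2 * (\<phi> (t j) * \<rho> j)" and "0 \<le> real_of_ereal (?K j)"
      using K_nonneg[of j] by (cases "?K j"; simp)+
    then have "real_of_ereal (?K j) / \<phi> (t j) \<le> 2 * \<rho> j"
      and "0 \<le> real_of_ereal (?K j) / \<phi> (t j)"
      using \<phi>[of j] by (simp_all add: field_simps)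
    then show ?thesis by linarith
  qed
  then have "interp_norm (weighted_lq_norm q w0) (weighted_lq_norm q w1) \<phi> p t a \<le> seq_norm p (\<lambda>j. 2 * \<rho> j)"
    using sum unfolding interp_norm_def by (simp add: seq_norm_mono[OF p])
  also have "\<dots> = ereal 2 * lp_lq_norm p q (\<lambda>j i. min (w0 i) (t j * w1 i) / \<phi> (t j)) a"
    unfolding L_eq by (rule seq_norm_cmult[OF p]) simp
  finally show ?thesis .
qed

theorem interp_norm_weighted_lq_equiv_lp_lq_norm:
  assumes p: "1 \<le> p" and q: "1 \<le> q" and w: "\<And>i. 0 < w0 i" "\<And>i. 0 < w1 i"
    and t: "\<And>j. 0 < t j" and \<phi>: "\<And>j. 0 < \<phi> (t j)"
  shows "equiv_spaces (interp_norm (weighted_lq_norm q w0) (weighted_lq_norm q w1) \<phi> p t)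
           (lp_lq_norm p q (\<lambda>j i. min (w0 i) (t j * w1 i) / \<phi> (t j)))"
  using lp_lq_norm_le_interp_norm[of p q w0 w1 t \<phi>, OF p q w t \<phi>]
    interp_norm_le_lp_lq_norm[of p q w0 w1 t \<phi>, OF p q w t \<phi>]
  by (intro equiv_spacesI[of 4 2]) (simp_all add: interp_norm_nonneg[OF p] lp_lq_norm_nonneg[OF p])

theorem lp_lq_norm_discretized_equiv_mixed_norm:
  assumes p: "1 \<le> p" and q: "1 \<le> q"
    and \<phi>: "nd_quasi_concave \<phi>" and t: "discretizing_seq t \<phi>"
    and w: "\<And>i. 0 < w0 i" "\<And>i. 0 < w1 i"
    and u: "\<And>i. u i = w0 i / w1 i" and V: "\<And>i. V i = w0 i / \<phi> (u i)"
  shows "equiv_spaces (lp_lq_norm p q (\<lambda>j i. min (w0 i) (t j * w1 i) / \<phi> (t j)))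
           (mixed_norm p q (\<lambda>k. {i. t k \<le> u i \<and> u i \<le> t (k + 1)}) V)"
proof -
  define W where "W j i = min (w0 i) (t j * w1 i) / \<phi> (t j)" for j i
  define U where "U k i = (if t k \<le> u i \<and> u i \<le> t (k + 1) then V i else 0)" for k i
  have W_nonneg: "0 \<le> W j i" for j i
    unfolding W_def using w[of i] discretizing_seq_pos[OF t, of j]
      nd_quasi_concave_pos[OF \<phi> discretizing_seq_pos[OF t, of j]] by simp
  have U_nonneg: "0 \<le> U k i" for k i
    unfolding U_def V u using w[of i] nd_quasi_concave_pos[OF \<phi>, of "w0 i / w1 i"] by simp
  have "U k i \<le> 2 * (W k i + W (k + 1) i)" for k i
  proof (cases "t k \<le> u i \<and> u i \<le> t (k + 1)")
    case True
    then show ?thesis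
      unfolding U_def W_def V u
      using discretizing_seq_weight_le_neighbours[OF \<phi> t w(1)[of i] w(2)[of i], of k] by simp
  next
    case False
    then show ?thesis unfolding U_def using W_nonneg[of k i] W_nonneg[of "k + 1" i] by auto
  qed
  then have neighbours: "\<bar>U k i\<bar> \<le> 2 * (\<bar>W k i\<bar> + \<bar>W (k + 1) i\<bar>)" for k i
    by (simp add: abs_of_nonneg U_nonneg W_nonneg)
  obtain \<kappa> where \<kappa>: "\<And>i. t (\<kappa> i) \<le> u i \<and> u i < t (\<kappa> i + 1)"
    using strongly_increasing_bracket_fun[of t u] t w unfolding discretizing_seq_def u by auto
  have "W j i \<le> 2 * (1 / 2) ^ nat \<bar>j - \<kappa> i\<bar> * U (\<kappa> i) i" for j i
    unfolding W_def U_def V using \<kappa>[of i] discretizing_seq_min_weight_le_geometric[OF \<phi> t w(1)[of i] w(2)[of i]]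
    by (auto simp: u)
  then have geometric: "\<bar>W j i\<bar> \<le> 2 * (1 / 2) ^ nat \<bar>j - \<kappa> i\<bar> * \<bar>U (\<kappa> i) i\<bar>" for j i
    by (simp add: abs_of_nonneg U_nonneg W_nonneg)
  have "mixed_norm p q (\<lambda>k. {i. t k \<le> u i \<and> u i \<le> t (k + 1)}) V = lp_lq_norm p q U"
    unfolding mixed_norm_eq_lp_lq_norm U_def by simp
  moreover have "equiv_spaces (lp_lq_norm p q W) (lp_lq_norm p q U)"
  proof (rule equiv_spacesI[of "32 * 2" "2 * (2 / (1 - sqrt (1 / 2)))\<^sup>2"])
    show "lp_lq_norm p q U a \<le> ereal (32 * 2) * lp_lq_norm p q W a" if "lp_lq_norm p q W a < \<infinity>" for a
      by (rule lp_lq_norm_le_neighbours[OF p q _ neighbours that]) simp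
    show "lp_lq_norm p q W a \<le> ereal (2 * (2 / (1 - sqrt (1 / 2)))\<^sup>2) * lp_lq_norm p q U a"
      if "lp_lq_norm p q U a < \<infinity>" for a
      by (rule lp_lq_norm_le_geometric[OF p q _ _ _ geometric that]) auto
  qed (auto simp: lp_lq_norm_nonneg[OF p] field_simps)
  ultimately show ?thesis unfolding W_def by simp
qed

theorem interp_norm_weighted_lq_equiv_mixed_norm:
  assumes p: "1 \<le> p" and q: "1 \<le> q"
    and \<phi>: "nd_quasi_concave \<phi>" and t: "discretizing_seq t \<phi>"
    and w: "\<And>i. 0 < w0 i" "\<And>i. 0 < w1 i"
    and u: "\<And>i. u i = w0 i / w1 i" and V: "\<And>i. V i = w0 i / \<phi> (u i)"
  shows "equiv_spaces (interp_norm (weighted_lq_norm q w0) (weighted_lq_norm q w1) \<phi> p t)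
           (mixed_norm p q (\<lambda>k. {i. t k \<le> u i \<and> u i \<le> t (k + 1)}) V)"
proof (rule equiv_spaces_trans)
  show "equiv_spaces (interp_norm (weighted_lq_norm q w0) (weighted_lq_norm q w1) \<phi> p t)
      (lp_lq_norm p q (\<lambda>j i. min (w0 i) (t j * w1 i) / \<phi> (t j)))"
    using discretizing_seq_pos[OF t] nd_quasi_concave_pos[OF \<phi> discretizing_seq_pos[OF t]]
    by (intro interp_norm_weighted_lq_equiv_lp_lq_norm[OF p q w])
  show "equiv_spaces (lp_lq_norm p q (\<lambda>j i. min (w0 i) (t j * w1 i) / \<phi> (t j)))
      (mixed_norm p q (\<lambda>k. {i. t k \<le> u i \<and> u i \<le> t (k + 1)}) V)"
    by (rule lp_lq_norm_discretized_equiv_mixed_norm[OF p q \<phi> t w u V])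
qed (simp_all add: interp_norm_nonneg[OF p] mixed_norm_eq_lp_lq_norm lp_lq_norm_nonneg[OF p])

theorem corollary3p4:
  fixes p q :: ereal and \<phi>0 \<phi>1 \<phi> :: "real \<Rightarrow> real" and tt t :: "int \<Rightarrow> real"
  assumes "1 \<le> p" and "1 \<le> q"
    and "nd_quasi_concave \<phi>0" and "nd_quasi_concave \<phi>1" and "nd_quasi_concave \<phi>"
    and "discretizing_seq tt (comp_qc \<phi> \<phi>0 \<phi>1)"
    and "discretizing_seq t \<phi>"
  shows "equiv_spaces
     (interp_norm (weighted_lq_norm q (\<lambda>i. 1 / \<phi>0 (tt i)))
                  (weighted_lq_norm q (\<lambda>i. 1 / \<phi>1 (tt i))) \<phi> p t)
     (mixed_norm p q (\<lambda>k. {i. t k \<le> \<phi>1 (tt i) / \<phi>0 (tt i) \<and> \<phi>1 (tt i) / \<phi>0 (tt i) \<le> t (k + 1)})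
                 (\<lambda>i. 1 / comp_qc \<phi> \<phi>0 \<phi>1 (tt i)))"
proof (rule interp_norm_weighted_lq_equiv_mixed_norm[OF assms(1,2,5,7)])
  fix i
  have "0 < tt i" by (rule discretizing_seq_pos[OF assms(6)])
  then have "0 < \<phi>0 (tt i)" and "0 < \<phi>1 (tt i)"
    using nd_quasi_concave_pos assms(3,4) by blast+
  then show "0 < 1 / \<phi>0 (tt i)" and "0 < 1 / \<phi>1 (tt i)"
    and "\<phi>1 (tt i) / \<phi>0 (tt i) = (1 / \<phi>0 (tt i)) / (1 / \<phi>1 (tt i))"
    by simp_all
  show "1 / comp_qc \<phi> \<phi>0 \<phi>1 (tt i) = (1 / \<phi>0 (tt i)) / \<phi> (\<phi>1 (tt i) / \<phi>0 (tt i))"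
    by (simp add: comp_qc_def)
qed

end
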